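(* Let $\mathcal{R}^{rsc}$ be a rich single-crossing domain and $F:\mathcal{R}^{rsc}\to\mathbb{Z}$ a mechanism that is monotone with $V^F$ continuous. Suppose the range $Rn(F)$ is countable, closed in $\mathbb{Z}$, and has finitely many limit points. Then $F$ is strategy-proof.
   Context: $\mathbb{Z}=[0,\infty)\times[0,1]$ (Euclidean topology); $(t',q')<(t'',q'')$ means $t'<t''$, $q'<q''$; $x\le y$ means $x=y$ or $x<y$; $\square(z)=\{x:x\le z\}$. A classical preference is a complete transitive relation $R$ on $\mathbb{Z}$ (strict part $P$, indifference $I$) strictly decreasing in $t$ for fixed $q$, strictly increasing in $q$ for fixed $t$, with closed upper and lower contour sets. Distinct classical preferences satisfy single-crossing if any indifference set of one meets any indifference set of the other in at most one point. A rich single-crossing domain $\mathcal{R}^{rsc}$ is a set of pairwise single-crossing classical preferences such that for all $x'<x''$ some member is indifferent between them. For distinct members, $R'\prec R''$ means $\square(z)\cap\{x:xR''z\}\subseteq\square(z)\cap\{x:xR'z\}$ for all $z$; $\prec$ is a linear order; order topology. $F$ is strategy-proof if $F(R')R'F(R'')$ for all $R',R''$; monotone if $R'\prec R''$ implies $F(R')\le F(R'')$. $V^F(R)=\{z:zIF(R)\}$ is continuous if for every $R$ and every monotone sequence $R^n\to R$ ($R^n\precsim R^{n+1}$ for all $n$, or $R^{n+1}\precsim R^n$ for all $n$), $F(R^n)$ converges and $\lim F(R^n)\,I\,F(R)$. *)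

theory Defs
  imports "HOL-Analysis.Analysis"
begin

type_synonym pt = "real \<times> real"
type_synonym pref = "pt \<Rightarrow> pt \<Rightarrow> bool"   \<comment> \<open>R x y means x R y (x weakly preferred to y)\<close>

definition Zset :: "pt set" where
  "Zset = {(t, q). 0 \<le> t \<and> 0 \<le> q \<and> q \<le> 1}"

definition lt_pt :: "pt \<Rightarrow> pt \<Rightarrow> bool" where
  "lt_pt x y \<longleftrightarrow> fst x < fst y \<and> snd x < snd y"

definition le_pt :: "pt \<Rightarrow> pt \<Rightarrow> bool" where
  "le_pt x y \<longleftrightarrow> x = y \<or> lt_pt x y"

definition box_pt :: "pt \<Rightarrow> pt set" where
  "box_pt z = {x \<in> Zset. le_pt x z}"

definition strict :: "pref \<Rightarrow> pt \<Rightarrow> pt \<Rightarrow> bool" where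
  "strict R x y \<longleftrightarrow> R x y \<and> \<not> R y x"

definition indiff :: "pref \<Rightarrow> pt \<Rightarrow> pt \<Rightarrow> bool" where
  "indiff R x y \<longleftrightarrow> R x y \<and> R y x"

definition classical_pref :: "pref \<Rightarrow> bool" where
  "classical_pref R \<longleftrightarrow>
     (\<forall>x y. R x y \<longrightarrow> x \<in> Zset \<and> y \<in> Zset) \<and>
     (\<forall>x\<in>Zset. \<forall>y\<in>Zset. R x y \<or> R y x) \<and>
     (\<forall>x\<in>Zset. \<forall>y\<in>Zset. \<forall>z\<in>Zset. R x y \<longrightarrow> R y z \<longrightarrow> R x z) \<and>
     (\<forall>t1 t2 q. (t1, q) \<in> Zset \<longrightarrow> (t2, q) \<in> Zset \<longrightarrow> t1 < t2 \<longrightarrow> strict R (t1, q) (t2, q)) \<and>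
     (\<forall>t q1 q2. (t, q1) \<in> Zset \<longrightarrow> (t, q2) \<in> Zset \<longrightarrow> q1 < q2 \<longrightarrow> strict R (t, q2) (t, q1)) \<and>
     (\<forall>z\<in>Zset. closed {x \<in> Zset. R x z} \<and> closed {x \<in> Zset. R z x})"

definition indiff_set :: "pref \<Rightarrow> pt \<Rightarrow> pt set" where
  "indiff_set R z = {x \<in> Zset. indiff R x z}"

definition single_crossing :: "pref \<Rightarrow> pref \<Rightarrow> bool" where
  "single_crossing R1 R2 \<longleftrightarrow>
     (\<forall>z1\<in>Zset. \<forall>z2\<in>Zset. \<forall>a b. a \<in> indiff_set R1 z1 \<inter> indiff_set R2 z2 \<longrightarrow>
        b \<in> indiff_set R1 z1 \<inter> indiff_set R2 z2 \<longrightarrow> a = b)"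

definition rich_single_crossing :: "pref set \<Rightarrow> bool" where
  "rich_single_crossing D \<longleftrightarrow>
     (\<forall>R\<in>D. classical_pref R) \<and>
     (\<forall>R1\<in>D. \<forall>R2\<in>D. R1 \<noteq> R2 \<longrightarrow> single_crossing R1 R2) \<and>
     (\<forall>x1\<in>Zset. \<forall>x2\<in>Zset. lt_pt x1 x2 \<longrightarrow> (\<exists>R\<in>D. indiff R x1 x2))"

definition prec :: "pref \<Rightarrow> pref \<Rightarrow> bool" where
  "prec R1 R2 \<longleftrightarrow> R1 \<noteq> R2 \<and>
     (\<forall>z\<in>Zset. box_pt z \<inter> {x. R2 x z} \<subseteq> box_pt z \<inter> {x. R1 x z})"

definition preceq :: "pref \<Rightarrow> pref \<Rightarrow> bool" where
  "preceq R1 R2 \<longleftrightarrow> R1 = R2 \<or> prec R1 R2"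

definition strategy_proof :: "pref set \<Rightarrow> (pref \<Rightarrow> pt) \<Rightarrow> bool" where
  "strategy_proof D F \<longleftrightarrow> (\<forall>R1\<in>D. \<forall>R2\<in>D. R1 (F R1) (F R2))"

definition monotone_mech :: "pref set \<Rightarrow> (pref \<Rightarrow> pt) \<Rightarrow> bool" where
  "monotone_mech D F \<longleftrightarrow> (\<forall>R1\<in>D. \<forall>R2\<in>D. prec R1 R2 \<longrightarrow> le_pt (F R1) (F R2))"

text \<open>Convergence in the order topology of (D, \<prec>) (subbasis of open rays).\<close>
definition order_converges :: "pref set \<Rightarrow> (nat \<Rightarrow> pref) \<Rightarrow> pref \<Rightarrow> bool" where
  "order_converges D S R \<longleftrightarrow>
     (\<forall>a\<in>D. prec a R \<longrightarrow> (\<forall>\<^sub>F n in sequentially. prec a (S n))) \<and>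
     (\<forall>b\<in>D. prec R b \<longrightarrow> (\<forall>\<^sub>F n in sequentially. prec (S n) b))"

definition monotone_seq :: "(nat \<Rightarrow> pref) \<Rightarrow> bool" where
  "monotone_seq S \<longleftrightarrow> (\<forall>n. preceq (S n) (S (Suc n))) \<or> (\<forall>n. preceq (S (Suc n)) (S n))"

definition VF_continuous :: "pref set \<Rightarrow> (pref \<Rightarrow> pt) \<Rightarrow> bool" where
  "VF_continuous D F \<longleftrightarrow>
     (\<forall>R\<in>D. \<forall>S. (\<forall>n. S n \<in> D) \<longrightarrow> monotone_seq S \<longrightarrow> order_converges D S R \<longrightarrow>
        (\<exists>L. (\<lambda>n. F (S n)) \<longlonglongrightarrow> L \<and> indiff R L (F R)))"

end

theory Submission
  imports Defs
begin

text \<open>Single crossing makes the type order a linear order on the domain which has a countable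
  dense subset and no gaps, so every type is the limit of monotone sequences of types.
  Monotonicity makes the range of F a chain for the product order. For two consecutive outcomes
  a < b, continuity of the indirect utility along such a sequence yields a type indifferent
  between a and b that separates the types receiving a from those receiving b, and single crossing
  shows that none of them gains by mimicking the other side. Because the range is closed with
  finitely many limit points, every pair of outcomes is reached from consecutive pairs by chaining
  and by passing to limits from inside, and both operations preserve these incentive constraints.\<close>

lemma mem_Zset [simp]: "(t, q) \<in> Zset \<longleftrightarrow> 0 \<le> t \<and> 0 \<le> q \<and> q \<le> 1"
  by (simp add: Zset_def)

lemma mem_Zset_iff: "x \<in> Zset \<longleftrightarrow> 0 \<le> fst x \<and> 0 \<le> snd x \<and> snd x \<le> 1"
  by (cases x) simp

lemma closed_Zset: "closed Zset"
proof -
  have "Zset = {x. 0 \<le> fst x} \<inter> {x. 0 \<le> snd x} \<inter> {x. snd x \<le> 1}"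
    by (auto simp: mem_Zset_iff)
  moreover have "closed {x :: pt. 0 \<le> fst x}" "closed {x :: pt. 0 \<le> snd x}"
    "closed {x :: pt. snd x \<le> 1}"
    by (intro closed_Collect_le continuous_intros)+
  ultimately show ?thesis by (metis closed_Int)
qed

lemma closed_avoid:
  assumes "closed C" "x \<notin> C"
  obtains e where "e > 0" "\<And>y. dist y x < e \<Longrightarrow> y \<notin> C"
  using assms open_dist[of "- C"] unfolding closed_def by (metis ComplD ComplI dist_commute)

lemma lt_pt_Pair [simp]: "lt_pt (t, q) (t', q') \<longleftrightarrow> t < t' \<and> q < q'"
  by (simp add: lt_pt_def)

lemma lt_pt_irrefl: "\<not> lt_pt x x"
  unfolding lt_pt_def by auto

lemma le_lt_pt_trans: "le_pt x y \<Longrightarrow> lt_pt y z \<Longrightarrow> lt_pt x z"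
  unfolding le_pt_def lt_pt_def by auto

lemma lt_le_pt_trans: "lt_pt x y \<Longrightarrow> le_pt y z \<Longrightarrow> lt_pt x z"
  unfolding le_pt_def lt_pt_def by auto

lemma lt_pt_near:
  assumes "lt_pt x z"
  obtains e where "e > 0" "\<And>x' z'. dist x' x < e \<Longrightarrow> dist z' z < e \<Longrightarrow> lt_pt x' z'"
proof
  let ?e = "min (fst z - fst x) (snd z - snd x) / 2"
  show "?e > 0" using assms unfolding lt_pt_def by simp
  fix x' z' assume "dist x' x < ?e" "dist z' z < ?e"
  then show "lt_pt x' z'"
    using assms dist_fst_le[of x' x] dist_snd_le[of x' x] dist_fst_le[of z' z] dist_snd_le[of z' z]
    unfolding lt_pt_def dist_real_def by (simp add: abs_le_iff min_def split: if_split_asm; linarith)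
qed

lemma dist_Pair_fst [simp]: "dist (t :: real, q :: real) (t', q) = \<bar>t - t'\<bar>"
  by (simp add: dist_Pair_Pair dist_real_def)

lemma dist_Pair_snd [simp]: "dist (t :: real, q :: real) (t, q') = \<bar>q - q'\<bar>"
  by (simp add: dist_Pair_Pair dist_real_def)

lemma closed_vimage_Pair_left: "closed C \<Longrightarrow> closed ((\<lambda>t. (t, q)) -` C)"
  by (intro continuous_closed_vimage continuous_intros)

lemma small_shift:
  fixes e a b :: real
  assumes "0 < e" "a < b"
  obtains d where "0 < d" "d < e" "a + d < b"
  using assms by (intro that[of "min (e/2) ((b - a)/2)"]) (auto simp: min_def field_simps)

lemma rational_approx_Zset:
  assumes "p \<in> Zset" "e > 0"
  obtains r where "r \<in> Zset" "fst r \<in> \<rat>" "snd r \<in> \<rat>" "dist r p < e"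
proof -
  obtain t q where p: "p = (t, q)" "0 \<le> t" "0 \<le> q" "q \<le> 1" using assms(1) by (cases p) auto
  obtain r1 where r1: "r1 \<in> \<rat>" "t < r1" "r1 < t + e/2"
    using Rats_dense_in_real[of t "t + e/2"] assms(2) by auto
  obtain r2 where r2: "r2 \<in> \<rat>" "0 \<le> r2" "r2 \<le> q" "q - e/2 < r2"
  proof (cases "q = 0")
    case True
    then show ?thesis using that[of 0] assms(2) by auto
  next
    case False
    then obtain r where "r \<in> \<rat>" "max 0 (q - e/2) < r" "r < q"
      using Rats_dense_in_real[of "max 0 (q - e/2)" q] p assms(2) by auto
    then show ?thesis using that[of r] by auto
  qed
  have "dist (r1, r2) p \<le> dist r1 t + dist r2 q"
    unfolding p dist_Pair_Pair using sqrt_sum_squares_le_sum_abs[of "dist r1 t" "dist r2 q"] by simp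
  also have "\<dots> < e" using r1 r2 by (auto simp: dist_real_def)
  finally show ?thesis using that[of "(r1, r2)"] r1 r2 p by auto
qed

section \<open>Monotone approximation in orders with a countable dense subset\<close>

lemma running_minimum:
  fixes lt :: "'a \<Rightarrow> 'a \<Rightarrow> bool" and e :: "nat \<Rightarrow> 'a"
  assumes "transp_on D lt" "totalp_on D lt" "range e \<subseteq> D"
  obtains m where "\<And>n. m n \<in> range e" "\<And>n. m (Suc n) = m n \<or> lt (m (Suc n)) (m n)"
    "\<And>n k. k \<le> n \<Longrightarrow> m n = e k \<or> lt (m n) (e k)"
proof
  note trans = transp_onD[OF assms(1)] and total = totalp_onD[OF assms(2)]
  define m where "m = rec_nat (e 0) (\<lambda>n mn. if lt (e (Suc n)) mn then e (Suc n) else mn)"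
  have m0: "m 0 = e 0" and mSuc: "m (Suc n) = (if lt (e (Suc n)) (m n) then e (Suc n) else m n)" for n
    unfolding m_def by simp_all
  show m: "m n \<in> range e" for n by (induction n) (simp_all add: m0 mSuc)
  show "m (Suc n) = m n \<or> lt (m (Suc n)) (m n)" for n by (auto simp: mSuc)
  have eD: "e n \<in> D" and mD: "m n \<in> D" for n using m assms(3) by blast+
  show "m n = e k \<or> lt (m n) (e k)" if "k \<le> n" for n k
    using that
  proof (induction n)
    case (Suc n)
    show ?case
    proof (cases "k = Suc n")
      case True
      then show ?thesis using total[OF mD eD, of n "Suc n"] by (auto simp: mSuc)
    next
      case False
      then have "m n = e k \<or> lt (m n) (e k)" using Suc by simp
      then show ?thesis using trans[OF eD mD eD, of "Suc n" n k] by (auto simp: mSuc)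
    qed
  qed (simp add: m0)
qed

lemma countable_dense_approach:
  fixes lt :: "'a \<Rightarrow> 'a \<Rightarrow> bool"
  assumes "transp_on D lt" "totalp_on D lt"
    and C: "C \<subseteq> D" "countable C"
    and dense: "\<And>a b. a \<in> D \<Longrightarrow> b \<in> D \<Longrightarrow> lt a b \<Longrightarrow> \<exists>c\<in>C. lt a c \<and> lt c b"
    and s: "s \<in> D" "T \<in> D" "lt s T"
  obtains S where "\<And>n. S n \<in> D \<and> lt s (S n) \<and> lt (S n) T"
    "\<And>n. S (Suc n) = S n \<or> lt (S (Suc n)) (S n)"
    "\<And>b. b \<in> D \<Longrightarrow> lt s b \<Longrightarrow> \<forall>\<^sub>F n in sequentially. lt (S n) b"
proof -
  note trans = transp_onD[OF assms(1)] and total = totalp_onD[OF assms(2)]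
  define Cs where "Cs = {c \<in> C. lt s c \<and> lt c T}"
  have "Cs \<noteq> {}" using dense[OF s] unfolding Cs_def by blast
  moreover have "countable Cs" using C unfolding Cs_def by simp
  ultimately have e: "range (from_nat_into Cs) = Cs" by (rule range_from_nat_into)
  then have "range (from_nat_into Cs) \<subseteq> D" using C unfolding Cs_def by blast
  then obtain m where m: "\<And>n. m n \<in> Cs" "\<And>n. m (Suc n) = m n \<or> lt (m (Suc n)) (m n)"
    "\<And>n k. k \<le> n \<Longrightarrow> m n = from_nat_into Cs k \<or> lt (m n) (from_nat_into Cs k)"
    using running_minimum[OF assms(1,2)] e by metis
  have mD: "m n \<in> D" for n using m(1) C unfolding Cs_def by blast
  show ?thesis
  proof (rule that)
    show "m n \<in> D \<and> lt s (m n) \<and> lt (m n) T" for n using m(1) mD unfolding Cs_def by auto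
    show "m (Suc n) = m n \<or> lt (m (Suc n)) (m n)" for n by (rule m(2))
  next
    fix b assume b: "b \<in> D" "lt s b"
    have "\<exists>c\<in>Cs. lt c b"
    proof (cases "lt b T")
      case True
      obtain c where c: "c \<in> C" "lt s c" "lt c b" using dense[OF s(1) b] by blast
      then have "lt c T" using trans[of c b T] C b s True by blast
      then show ?thesis using c unfolding Cs_def by blast
    next
      case False
      obtain c where c: "c \<in> C" "lt s c" "lt c T" using dense[OF s] by blast
      moreover have "T = b \<or> lt T b" using total[OF b(1) s(2)] False by blast
      then have "lt c b" using trans[of c T b] c C s(2) b(1) by blast
      ultimately show ?thesis unfolding Cs_def by blast
    qed
    then obtain k where k: "lt (from_nat_into Cs k) b" using e by (metis imageE)
    have "from_nat_into Cs k \<in> D" using e C unfolding Cs_def by blast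
    then have "lt (m n) b" if "k \<le> n" for n
      using m(3)[OF that] k trans[OF mD _ b(1)] by auto
    then show "\<forall>\<^sub>F n in sequentially. lt (m n) b" unfolding eventually_sequentially by blast
  qed
qed

section \<open>Induction over closed sets of reals with finitely many limit points\<close>

lemma interval_split_induct:
  fixes X S :: "real set"
  assumes "finite (X \<inter> {u<..<v})" "X \<subseteq> S" "u \<in> S" "v \<in> S" "u < v"
    and base: "\<And>u v. u \<in> S \<Longrightarrow> v \<in> S \<Longrightarrow> u < v \<Longrightarrow> X \<inter> {u<..<v} = {} \<Longrightarrow> P u v"
    and trans: "\<And>u v w. u \<in> S \<Longrightarrow> v \<in> S \<Longrightarrow> w \<in> S \<Longrightarrow> u < v \<Longrightarrow> v < w
                  \<Longrightarrow> P u v \<Longrightarrow> P v w \<Longrightarrow> P u w"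
  shows "P u v"
  using assms(1,3-5)
proof (induction "card (X \<inter> {u<..<v})" arbitrary: u v rule: less_induct)
  case (less u v)
  show ?case
  proof (cases "X \<inter> {u<..<v} = {}")
    case True
    then show ?thesis using base less.prems by blast
  next
    case False
    then obtain w where w: "w \<in> X" "u < w" "w < v" by auto
    have "X \<inter> {u<..<w} \<subset> X \<inter> {u<..<v}" "X \<inter> {w<..<v} \<subset> X \<inter> {u<..<v}"
      using w by auto
    then have "card (X \<inter> {u<..<w}) < card (X \<inter> {u<..<v})"
      "card (X \<inter> {w<..<v}) < card (X \<inter> {u<..<v})"
      "finite (X \<inter> {u<..<w})" "finite (X \<inter> {w<..<v})"
      using less.prems(1) by (auto intro: psubset_card_mono finite_subset)
    then have "P u w" "P w v"
      using less.hyps less.prems w assms(2) by blast+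
    then show ?thesis using trans less.prems w assms(2) by blast
  qed
qed

lemma finite_Icc_if_no_limpt:
  fixes S :: "real set"
  assumes "\<And>x. x \<in> {a..b} \<Longrightarrow> \<not> x islimpt S"
  shows "finite (S \<inter> {a..b})"
proof (rule ccontr)
  assume "infinite (S \<inter> {a..b})"
  then obtain x where "x \<in> {a..b}" "x islimpt (S \<inter> {a..b})"
    using Heine_Borel_imp_Bolzano_Weierstrass[OF compact_Icc] by blast
  then show False using assms islimpt_subset by blast
qed

locale interval_induction =
  fixes S :: "real set" and P :: "real \<Rightarrow> real \<Rightarrow> bool"
  assumes closed: "closed S"
    and gap: "\<And>u v. u \<in> S \<Longrightarrow> v \<in> S \<Longrightarrow> u < v \<Longrightarrow> S \<inter> {u<..<v} = {} \<Longrightarrow> P u v"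
    and trans: "\<And>u v w. u \<in> S \<Longrightarrow> v \<in> S \<Longrightarrow> w \<in> S \<Longrightarrow> u < v \<Longrightarrow> v < w
                  \<Longrightarrow> P u v \<Longrightarrow> P v w \<Longrightarrow> P u w"
    and limit_left: "\<And>u v f. u \<in> S \<Longrightarrow> v \<in> S \<Longrightarrow> (\<And>n. f n \<in> S \<inter> {u<..<v}) \<Longrightarrow> f \<longlonglongrightarrow> u
                  \<Longrightarrow> (\<And>n. P (f n) v) \<Longrightarrow> P u v"
    and limit_right: "\<And>u v f. u \<in> S \<Longrightarrow> v \<in> S \<Longrightarrow> (\<And>n. f n \<in> S \<inter> {u<..<v}) \<Longrightarrow> f \<longlonglongrightarrow> v
                  \<Longrightarrow> (\<And>n. P u (f n)) \<Longrightarrow> P u v"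
begin

lemma finite_case:
  "finite (S \<inter> {u<..<v}) \<Longrightarrow> u \<in> S \<Longrightarrow> v \<in> S \<Longrightarrow> u < v \<Longrightarrow> P u v"
  by (rule interval_split_induct[where X = S]) (auto intro: gap trans)

lemma left_end_case:
  assumes uv: "u \<in> S" "v \<in> S" "u < v" and fin: "\<And>a. u < a \<Longrightarrow> finite (S \<inter> {a..v})"
  shows "P u v"
proof (cases "u islimpt (S \<inter> {u<..<v})")
  case True
  then obtain f where f: "\<And>n. f n \<in> S \<inter> {u<..<v}" "f \<longlonglongrightarrow> u"
    unfolding islimpt_sequential by blast
  have "P (f n) v" for n
    using f(1)[of n] uv fin[of "f n"] by (intro finite_case) (auto elim: finite_subset[rotated])
  then show ?thesis using limit_left[OF uv(1,2) f] by blast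
next
  case False
  then obtain e where e: "e > 0" "\<And>x. x \<in> S \<inter> {u<..<v} \<Longrightarrow> e \<le> dist x u"
    unfolding islimpt_approachable by force
  then have "S \<inter> {u<..<v} \<subseteq> S \<inter> {u + e..v}"
    by (fastforce simp: dist_real_def)
  moreover have "finite (S \<inter> {u + e..v})" using fin e(1) by simp
  ultimately have "finite (S \<inter> {u<..<v})" by (rule finite_subset)
  then show ?thesis using finite_case uv by blast
qed

lemma right_end_case:
  assumes uv: "u \<in> S" "v \<in> S" "u < v" and fin: "\<And>b. b < v \<Longrightarrow> finite (S \<inter> {u..b})"
  shows "P u v"
proof (cases "v islimpt (S \<inter> {u<..<v})")
  case True
  then obtain f where f: "\<And>n. f n \<in> S \<inter> {u<..<v}" "f \<longlonglongrightarrow> v"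
    unfolding islimpt_sequential by blast
  have "P u (f n)" for n
    using f(1)[of n] uv fin[of "f n"] by (intro finite_case) (auto elim: finite_subset[rotated])
  then show ?thesis using limit_right[OF uv(1,2) f] by blast
next
  case False
  then obtain e where e: "e > 0" "\<And>x. x \<in> S \<inter> {u<..<v} \<Longrightarrow> e \<le> dist x v"
    unfolding islimpt_approachable by force
  then have "S \<inter> {u<..<v} \<subseteq> S \<inter> {u..v - e}"
    by (fastforce simp: dist_real_def)
  moreover have "finite (S \<inter> {u..v - e})" using fin e(1) by simp
  ultimately have "finite (S \<inter> {u<..<v})" by (rule finite_subset)
  then show ?thesis using finite_case uv by blast
qed

lemma no_limpt_between:
  assumes uv: "u \<in> S" "v \<in> S" "u < v" and L: "\<And>x. x \<in> {u<..<v} \<Longrightarrow> \<not> x islimpt S"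
  shows "P u v"
proof (cases "S \<inter> {u<..<v} = {}")
  case True
  then show ?thesis using gap uv by blast
next
  case False
  then obtain w where w: "w \<in> S" "u < w" "w < v" by auto
  have "P u w"
    using uv w L by (intro left_end_case finite_Icc_if_no_limpt) auto
  moreover have "P w v"
    using uv w L by (intro right_end_case finite_Icc_if_no_limpt) auto
  ultimately show ?thesis using trans uv w by blast
qed

theorem induct:
  assumes "finite {x. x islimpt S}" "u \<in> S" "v \<in> S" "u < v"
  shows "P u v"
proof (rule interval_split_induct[where X = "{x. x islimpt S}"])
  show "{x. x islimpt S} \<subseteq> S" using closed by (auto simp: closed_limpt)
qed (use assms trans in \<open>auto intro: no_limpt_between\<close>)

end

section \<open>Classical preferences\<close>

locale preference =
  fixes R :: pref
  assumes classical: "classical_pref R"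
begin

lemma in_Zset: "R x y \<Longrightarrow> x \<in> Zset \<and> y \<in> Zset"
  using classical unfolding classical_pref_def by blast

lemma total: "x \<in> Zset \<Longrightarrow> y \<in> Zset \<Longrightarrow> R x y \<or> R y x"
  using classical unfolding classical_pref_def by blast

lemma refl: "x \<in> Zset \<Longrightarrow> R x x"
  using total by blast

lemma trans: "R x y \<Longrightarrow> R y z \<Longrightarrow> R x z"
  using classical in_Zset unfolding classical_pref_def by blast

lemma strict_trans_weak: "strict R x y \<Longrightarrow> R y z \<Longrightarrow> strict R x z"
  unfolding strict_def using trans by blast

lemma weak_trans_strict: "R x y \<Longrightarrow> strict R y z \<Longrightarrow> strict R x z"
  unfolding strict_def using trans by blast

lemma strict_if_not_weak: "x \<in> Zset \<Longrightarrow> y \<in> Zset \<Longrightarrow> \<not> R x y \<Longrightarrow> strict R y x"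
  unfolding strict_def using total by blast

lemma strict_less_t:
  assumes "(t, q) \<in> Zset" "t < t'"
  shows "strict R (t, q) (t', q)"
proof -
  have "(t', q) \<in> Zset" using assms by simp
  then show ?thesis using assms classical unfolding classical_pref_def by blast
qed

lemma strict_greater_q:
  assumes "(t, q) \<in> Zset" "q' < q" "0 \<le> q'"
  shows "strict R (t, q) (t, q')"
proof -
  have "(t, q') \<in> Zset" using assms by simp
  then show ?thesis using assms classical unfolding classical_pref_def by blast
qed

lemma closed_upper: "z \<in> Zset \<Longrightarrow> closed {x \<in> Zset. R x z}"
  using classical unfolding classical_pref_def by blast

lemma closed_lower: "z \<in> Zset \<Longrightarrow> closed {x \<in> Zset. R z x}"
  using classical unfolding classical_pref_def by blast

lemma weak_dominance:
  assumes "(t, q) \<in> Zset" "t \<le> t'" "0 \<le> q'" "q' \<le> q"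
  shows "R (t, q) (t', q')"
proof -
  have "R (t, q) (t, q')"
    using assms strict_greater_q[of t q q'] refl[of "(t, q)"] by (cases "q' < q") (auto simp: strict_def)
  moreover have "R (t, q') (t', q')"
    using assms strict_less_t[of t q' t'] refl[of "(t, q')"] by (cases "t < t'") (auto simp: strict_def)
  ultimately show ?thesis using trans by blast
qed

lemma strict_dominance:
  assumes "(t, q) \<in> Zset" "t \<le> t'" "0 \<le> q'" "q' \<le> q" "t < t' \<or> q' < q"
  shows "strict R (t, q) (t', q')"
proof (cases "q' < q")
  case True
  then have "strict R (t, q) (t, q')" using assms strict_greater_q by blast
  moreover have "R (t, q') (t', q')" using assms weak_dominance[of t q' t' q'] by simp
  ultimately show ?thesis using strict_trans_weak by blast
next
  case False
  then show ?thesis using assms strict_less_t[of t q t'] by auto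
qed

lemma not_weak_near_right:
  assumes "x \<in> Zset" "z \<in> Zset" "\<not> R x z"
  obtains e where "e > 0" "\<And>y. y \<in> Zset \<Longrightarrow> dist y z < e \<Longrightarrow> \<not> R x y"
proof -
  have "z \<notin> {y \<in> Zset. R x y}" using assms(3) by simp
  then obtain e where "e > 0" "\<And>y. dist y z < e \<Longrightarrow> y \<notin> {y \<in> Zset. R x y}"
    using closed_avoid[OF closed_lower[OF assms(1)]] by blast
  then show ?thesis using that by simp
qed

lemma not_weak_near_left:
  assumes "x \<in> Zset" "z \<in> Zset" "\<not> R x z"
  obtains e where "e > 0" "\<And>y. y \<in> Zset \<Longrightarrow> dist y x < e \<Longrightarrow> \<not> R y z"
proof -
  have "x \<notin> {y \<in> Zset. R y z}" using assms(3) by simp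
  then obtain e where "e > 0" "\<And>y. dist y x < e \<Longrightarrow> y \<notin> {y \<in> Zset. R y z}"
    using closed_avoid[OF closed_upper[OF assms(2)]] by blast
  then show ?thesis using that by simp
qed

lemma closed_upper_level: "z \<in> Zset \<Longrightarrow> closed {t. R (t, q) z}"
proof -
  have "{t. R (t, q) z} = (\<lambda>t. (t, q)) -` {x \<in> Zset. R x z}" using in_Zset by blast
  then show "z \<in> Zset \<Longrightarrow> ?thesis" using closed_vimage_Pair_left[OF closed_upper] by simp
qed

lemma closed_lower_level: "z \<in> Zset \<Longrightarrow> closed {t. R z (t, q)}"
proof -
  have "{t. R z (t, q)} = (\<lambda>t. (t, q)) -` {x \<in> Zset. R z x}" using in_Zset by blast
  then show "z \<in> Zset \<Longrightarrow> ?thesis" using closed_vimage_Pair_left[OF closed_lower] by simp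
qed

lemma indiff_on_segment:
  assumes "z \<in> Zset" "0 \<le> a" "a \<le> b" "0 \<le> q" "q \<le> 1" "R (a, q) z" "R z (b, q)"
  obtains t where "a \<le> t" "t \<le> b" "indiff R (t, q) z"
proof -
  have "{a..b} \<subseteq> {t. R (t, q) z} \<union> {t. R z (t, q)}"
  proof
    fix t assume "t \<in> {a..b}"
    then have "(t, q) \<in> Zset" using assms by simp
    then show "t \<in> {t. R (t, q) z} \<union> {t. R z (t, q)}" using total[OF _ assms(1)] by simp
  qed
  moreover have "a \<in> {t. R (t, q) z} \<inter> {a..b}" "b \<in> {t. R z (t, q)} \<inter> {a..b}"
    using assms by simp_all
  ultimately have "{t. R (t, q) z} \<inter> {t. R z (t, q)} \<inter> {a..b} \<noteq> {}"
    using connected_closedD[OF connected_Icc _ _ closed_upper_level closed_lower_level] assms(1)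
    by blast
  then obtain t where "a \<le> t" "t \<le> b" "R (t, q) z" "R z (t, q)" by auto
  then show ?thesis using that unfolding indiff_def by blast
qed

lemma strict_at_higher_quality:
  assumes "(t, q) \<in> Zset" "q \<le> q'" "q' \<le> 1" "strict R (t, q) z"
  shows "strict R (t, q') z"
  using weak_trans_strict[OF weak_dominance[of t q' t q]] assms by auto

lemma strictly_better_below:
  assumes "(t, q) \<in> Zset" "0 < t" "0 < q"
  obtains q' where "0 \<le> q'" "q' < q" "strict R (0, q') (t, q)"
proof -
  have "strict R (0, q) (t, q)" using assms strict_less_t[of 0 q t] by simp
  then obtain e where e: "e > 0" "\<And>y. y \<in> Zset \<Longrightarrow> dist y (0, q) < e \<Longrightarrow> \<not> R (t, q) y"
    using not_weak_near_right[of "(t, q)" "(0, q)"] assms unfolding strict_def by auto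
  obtain d where d: "0 < d" "d < e" "0 + d < q" using small_shift[OF e(1) assms(3)] .
  then have "strict R (0, q - d) (t, q)"
    using e(2)[of "(0, q - d)"] assms strict_if_not_weak[of "(t, q)" "(0, q - d)"] by auto
  then show ?thesis using that[of "q - d"] d by simp
qed

lemma exists_indiff_below:
  assumes "(t, q) \<in> Zset" "0 < t" "0 < q"
  obtains x where "x \<in> Zset" "lt_pt x (t, q)" "indiff R x (t, q)"
proof -
  obtain q' where q': "0 \<le> q'" "q' < q" "strict R (0, q') (t, q)"
    using strictly_better_below[OF assms] .
  moreover have "R (t, q) (t, q')" using weak_dominance[of t q t q'] assms q' by auto
  ultimately obtain s where s: "0 \<le> s" "s \<le> t" "indiff R (s, q') (t, q)"
    using indiff_on_segment[of "(t, q)" 0 t q'] assms unfolding strict_def by auto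
  have "s \<noteq> t"
    using strict_greater_q[of t q q'] assms q' s(3) unfolding strict_def indiff_def by auto
  then show ?thesis using that[of "(s, q')"] s q' assms by auto
qed

lemma indiff_point_on_level:
  assumes z: "z \<in> Zset" and q: "0 \<le> q" "q < snd z" and t0: "0 \<le> t0" "strict R (t0, q) z"
  obtains w where "t0 < w" "indiff R (w, q) z"
proof -
  obtain tz qz where zz: "z = (tz, qz)" by (cases z)
  have Rz: "R z (tz, q)" using weak_dominance[of tz qz tz q] z q zz by auto
  have "t0 \<le> tz"
  proof (rule ccontr)
    assume "\<not> t0 \<le> tz"
    then have "R (tz, q) (t0, q)" using weak_dominance[of tz q t0 q] z q zz by auto
    then show False using t0(2) Rz trans unfolding strict_def by blast
  qed
  then obtain w where w: "t0 \<le> w" "indiff R (w, q) z"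
    using indiff_on_segment[OF z t0(1) _ q(1), of tz] t0 Rz z q zz
    unfolding strict_def by (auto simp: mem_Zset_iff)
  moreover have "t0 \<noteq> w" using t0 w unfolding strict_def indiff_def by blast
  ultimately have "t0 < w" by simp
  then show ?thesis using that w(2) by blast
qed

end

section \<open>Rich single-crossing domains\<close>

definition values_quality_less :: "pref \<Rightarrow> pref \<Rightarrow> pt \<Rightarrow> bool" where
  "values_quality_less Ra Rb z \<longleftrightarrow> (\<exists>x\<in>Zset. snd x < snd z \<and> strict Ra x z \<and> \<not> Rb x z)"

locale rsc_domain =
  fixes D :: "pref set"
  assumes rich_single_crossing: "rich_single_crossing D"
begin

lemma preference: "R \<in> D \<Longrightarrow> preference R"
  using rich_single_crossing unfolding rich_single_crossing_def preference_def by blast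

lemma exists_indiff: "x \<in> Zset \<Longrightarrow> z \<in> Zset \<Longrightarrow> lt_pt x z \<Longrightarrow> \<exists>R\<in>D. indiff R x z"
  using rich_single_crossing unfolding rich_single_crossing_def by blast

lemma indiff_unique:
  assumes "R1 \<in> D" "R2 \<in> D" "R1 \<noteq> R2" "x \<in> Zset" "z \<in> Zset" "indiff R1 x z" "indiff R2 x z"
  shows "x = z"
proof -
  have "single_crossing R1 R2"
    using rich_single_crossing assms unfolding rich_single_crossing_def by blast
  moreover have "indiff R1 z z" "indiff R2 z z"
    using assms preference.refl[OF preference] unfolding indiff_def by blast+
  ultimately show ?thesis using assms unfolding single_crossing_def indiff_set_def by blast
qed

lemma prec_weak:
  assumes "prec R1 R2" "z \<in> Zset" "x \<in> Zset" "lt_pt x z" "R2 x z"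
  shows "R1 x z"
  using assms unfolding prec_def box_pt_def le_pt_def by blast

lemma prec_strict_larger:
  assumes D: "R1 \<in> D" "R2 \<in> D" and p: "prec R1 R2" and Z: "x \<in> Zset" "z \<in> Zset"
    and lt: "lt_pt x z" and R1: "R1 z x"
  shows "strict R2 z x"
proof (cases "R1 x z")
  case False
  then have "\<not> R2 x z" using prec_weak[OF p Z(2,1) lt] by blast
  then show ?thesis using preference.strict_if_not_weak[OF preference[OF D(2)] Z] by blast
next
  case True
  interpret R1: preference R1 using preference D by blast
  interpret R2: preference R2 using preference D by blast
  show ?thesis
  proof (rule ccontr)
    assume "\<not> strict R2 z x"
    then have R2xz: "R2 x z" using R2.total[OF Z] unfolding strict_def by blast
    show False
    proof (cases "R2 z x")
      case True
      have "x = z"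
        using indiff_unique[OF D _ Z] True R2xz R1 \<open>R1 x z\<close> p unfolding indiff_def prec_def by blast
      then show False using lt lt_pt_irrefl by blast
    next
      case False
      obtain e where e: "e > 0" "\<And>y. y \<in> Zset \<Longrightarrow> dist y x < e \<Longrightarrow> \<not> R2 z y"
        using R2.not_weak_near_right[OF Z(2,1) False] by blast
      obtain t1 q1 t2 q2 where xz: "x = (t1, q1)" "z = (t2, q2)" by (cases x, cases z)
      then have "t1 < t2" "q1 < q2" using lt by auto
      then obtain d where d: "0 < d" "d < e" "t1 + d < t2" using small_shift[OF e(1)] by blast
      define y where "y = (t1 + d, q1)"
      have yZ: "y \<in> Zset" using Z d unfolding xz y_def by auto
      have "\<not> R2 z y" using e d yZ unfolding y_def xz by simp
      then have "R2 y z" using R2.total[OF Z(2) yZ] by blast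
      moreover have "lt_pt y z" using d \<open>q1 < q2\<close> unfolding y_def xz by auto
      ultimately have "R1 y z" using prec_weak[OF p Z(2) yZ] by blast
      moreover have "strict R1 x y" using R1.strict_less_t Z d unfolding xz y_def by auto
      ultimately show False using R1 R1.trans unfolding strict_def by blast
    qed
  qed
qed

lemma prec_strict_smaller:
  assumes D: "R1 \<in> D" "R2 \<in> D" and p: "prec R1 R2" and Z: "x \<in> Zset" "z \<in> Zset"
    and lt: "lt_pt x z" and R2: "R2 x z"
  shows "strict R1 x z"
  using prec_weak[OF p Z(2,1) lt R2] prec_strict_larger[OF D p Z lt] R2 unfolding strict_def by blast

lemma disagree_near_left:
  assumes "Ra \<in> D" "Rb \<in> D" "x \<in> Zset" "z \<in> Zset" "strict Ra x z" "\<not> Rb x z"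
  obtains e where "e > 0" "\<And>y. y \<in> Zset \<Longrightarrow> dist y x < e \<Longrightarrow> strict Ra y z \<and> \<not> Rb y z"
proof -
  interpret Ra: preference Ra using preference assms by blast
  interpret Rb: preference Rb using preference assms by blast
  obtain e1 where e1: "e1 > 0" "\<And>y. y \<in> Zset \<Longrightarrow> dist y x < e1 \<Longrightarrow> \<not> Ra z y"
    using Ra.not_weak_near_right[of z x] assms unfolding strict_def by blast
  obtain e2 where e2: "e2 > 0" "\<And>y. y \<in> Zset \<Longrightarrow> dist y x < e2 \<Longrightarrow> \<not> Rb y z"
    using Rb.not_weak_near_left[of x z] assms by blast
  show ?thesis
    using that[of "min e1 e2"] e1 e2 Ra.strict_if_not_weak[OF assms(4)] by auto
qed

lemma disagree_near_right:
  assumes "Ra \<in> D" "Rb \<in> D" "x \<in> Zset" "z \<in> Zset" "strict Ra x z" "\<not> Rb x z"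
  obtains e where "e > 0" "\<And>y. y \<in> Zset \<Longrightarrow> dist y z < e \<Longrightarrow> strict Ra x y \<and> \<not> Rb x y"
proof -
  interpret Ra: preference Ra using preference assms by blast
  interpret Rb: preference Rb using preference assms by blast
  obtain e1 where e1: "e1 > 0" "\<And>y. y \<in> Zset \<Longrightarrow> dist y z < e1 \<Longrightarrow> \<not> Ra y x"
    using Ra.not_weak_near_left[of z x] assms unfolding strict_def by blast
  obtain e2 where e2: "e2 > 0" "\<And>y. y \<in> Zset \<Longrightarrow> dist y z < e2 \<Longrightarrow> \<not> Rb x y"
    using Rb.not_weak_near_right[of x z] assms by blast
  show ?thesis
    using that[of "min e1 e2"] e1 e2 Ra.strict_if_not_weak[OF _ assms(3)] by auto
qed

text \<open>If two distinct types agreed on every bundle of a quality level below z that one of them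
  strictly prefers to z, their indifference curves through z would meet that level at the same
  point, a second crossing.\<close>

lemma disagree_on_level:
  assumes D: "Ra \<in> D" "Rb \<in> D" "Ra \<noteq> Rb" and z: "z \<in> Zset" and q: "0 \<le> q" "q < snd z"
    and t0: "0 \<le> t0" "strict Ra (t0, q) z"
  shows "\<exists>t\<ge>0. strict Ra (t, q) z \<and> \<not> Rb (t, q) z \<or> strict Rb (t, q) z \<and> \<not> Ra (t, q) z"
proof (rule ccontr)
  assume agree: "\<not> ?thesis"
  interpret Ra: preference Ra using preference D by blast
  interpret Rb: preference Rb using preference D by blast
  have line: "(t, q) \<in> Zset" if "0 \<le> t" for t using that q z by (auto simp: mem_Zset_iff)
  obtain w where w: "t0 < w" "indiff Ra (w, q) z" using Ra.indiff_point_on_level[OF z q t0] .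
  then have w0: "0 < w" using t0 by simp
  have "{0..<w} \<subseteq> {t. Rb (t, q) z}"
  proof
    fix t assume "t \<in> {0..<w}"
    then have "strict Ra (t, q) (w, q)" using Ra.strict_less_t[OF line[of t]] by auto
    then have "strict Ra (t, q) z" using Ra.strict_trans_weak w unfolding indiff_def by blast
    then show "t \<in> {t. Rb (t, q) z}" using agree \<open>t \<in> {0..<w}\<close> by auto
  qed
  then have "closure {0..<w} \<subseteq> {t. Rb (t, q) z}"
    by (intro closure_minimal Rb.closed_upper_level z)
  moreover have "w \<in> closure {0..<w}" using w0 by simp
  ultimately have "Rb (w, q) z" by blast
  have "{w<..} \<subseteq> {t. Rb z (t, q)}"
  proof
    fix t assume "t \<in> {w<..}"
    then have "strict Ra (w, q) (t, q)" using Ra.strict_less_t[OF line[of w]] w0 by auto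
    then have "\<not> Ra (t, q) z" using Ra.weak_trans_strict w unfolding indiff_def strict_def by blast
    moreover have "0 \<le> t" "(t, q) \<in> Zset" using line w0 \<open>t \<in> {w<..}\<close> by auto
    ultimately have "Rb z (t, q)" using agree Rb.total[OF z] unfolding strict_def by blast
    then show "t \<in> {t. Rb z (t, q)}" by simp
  qed
  then have "closure {w<..} \<subseteq> {t. Rb z (t, q)}"
    by (intro closure_minimal Rb.closed_lower_level z)
  moreover have "w \<in> closure {w<..}" by simp
  ultimately have "Rb z (w, q)" by blast
  then have "(w, q) = z"
    using indiff_unique[OF D line z] w w0 \<open>Rb (w, q) z\<close> unfolding indiff_def by auto
  then show False using q by auto
qed

lemma values_quality_less_cases:
  assumes D: "R1 \<in> D" "R2 \<in> D" "R1 \<noteq> R2" and z: "z \<in> Zset" "0 < fst z" "0 < snd z"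
  shows "values_quality_less R1 R2 z \<or> values_quality_less R2 R1 z"
proof -
  obtain tz qz where zz: "z = (tz, qz)" by (cases z)
  obtain q where q: "0 \<le> q" "q < qz" "strict R1 (0, q) z"
    using preference.strictly_better_below[OF preference[OF D(1)], of tz qz] z zz by auto
  then obtain t where "0 \<le> t" "strict R1 (t, q) z \<and> \<not> R2 (t, q) z \<or> strict R2 (t, q) z \<and> \<not> R1 (t, q) z"
    using disagree_on_level[OF D z(1), of q 0] zz by auto
  moreover have "(t, q) \<in> Zset" "snd (t, q) < snd z" using \<open>0 \<le> t\<close> q z zz by auto
  ultimately show ?thesis unfolding values_quality_less_def by blast
qed

lemma openin_disagreement_levels:
  assumes "Ra \<in> D" "Rb \<in> D" "z \<in> Zset" "0 \<le> lo" "hi \<le> 1"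
  shows "openin (top_of_set {lo..hi}) {q \<in> {lo..hi}. \<exists>t\<ge>0. strict Ra (t, q) z \<and> \<not> Rb (t, q) z}"
  unfolding openin_euclidean_subtopology_iff
proof (intro conjI ballI)
  fix q assume "q \<in> {q \<in> {lo..hi}. \<exists>t\<ge>0. strict Ra (t, q) z \<and> \<not> Rb (t, q) z}"
  then obtain t where t: "q \<in> {lo..hi}" "0 \<le> t" "strict Ra (t, q) z" "\<not> Rb (t, q) z" by blast
  then obtain e where e: "e > 0" "\<And>y. y \<in> Zset \<Longrightarrow> dist y (t, q) < e \<Longrightarrow> strict Ra y z \<and> \<not> Rb y z"
    using disagree_near_left[OF assms(1,2) _ assms(3)] assms(4,5) by (metis atLeastAtMost_iff mem_Zset order.trans)
  show "\<exists>e>0. \<forall>q'\<in>{lo..hi}. dist q' q < e \<longrightarrow> q' \<in> {q \<in> {lo..hi}. \<exists>t\<ge>0. strict Ra (t, q) z \<and> \<not> Rb (t, q) z}"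
  proof (intro exI conjI ballI impI)
    fix q' assume "q' \<in> {lo..hi}" "dist q' q < e"
    then show "q' \<in> {q \<in> {lo..hi}. \<exists>t\<ge>0. strict Ra (t, q) z \<and> \<not> Rb (t, q) z}"
      using e(2)[of "(t, q')"] t(2) assms(4,5) by (auto simp: dist_real_def)
  qed (rule e(1))
qed auto

lemma opposite_disagreements_on_level:
  assumes "R1 \<in> D" "R2 \<in> D" "(t, q) \<in> Zset" "(t', q) \<in> Zset"
    and "strict R2 (t, q) z" "\<not> R1 (t, q) z" "strict R1 (t', q) z" "\<not> R2 (t', q) z"
  shows False
proof -
  interpret R1: preference R1 using preference assms(1) by blast
  interpret R2: preference R2 using preference assms(2) by blast
  have "R1 (t, q) (t', q) \<or> R2 (t', q) (t, q)"
    using R1.weak_dominance[of t q t' q] R2.weak_dominance[of t' q t q] assms(3,4) by fastforce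
  then show False using assms(5-8) R1.trans R2.trans unfolding strict_def by blast
qed

text \<open>Between the two quality levels witnessing the two relations, connectedness provides a level
  with no disagreement at all, which single crossing rules out.\<close>

lemma values_quality_less_exclusive:
  assumes D: "R1 \<in> D" "R2 \<in> D" "R1 \<noteq> R2" and z: "z \<in> Zset"
    and "values_quality_less R2 R1 z" "values_quality_less R1 R2 z"
  shows False
proof -
  interpret R1: preference R1 using preference D by blast
  interpret R2: preference R2 using preference D by blast
  obtain t1 q1 where x1: "(t1, q1) \<in> Zset" "q1 < snd z" "strict R2 (t1, q1) z" "\<not> R1 (t1, q1) z"
    using assms(5) unfolding values_quality_less_def by auto
  obtain t2 q2 where x2: "(t2, q2) \<in> Zset" "q2 < snd z" "strict R1 (t2, q2) z" "\<not> R2 (t2, q2) z"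
    using assms(6) unfolding values_quality_less_def by auto
  define lo where "lo = min q1 q2"
  define hi where "hi = max q1 q2"
  have lohi: "0 \<le> lo" "lo \<le> hi" "hi < snd z" "snd z \<le> 1"
    using x1 x2 z unfolding lo_def hi_def by (auto simp: mem_Zset_iff)
  define O21 where "O21 = {q \<in> {lo..hi}. \<exists>t\<ge>0. strict R2 (t, q) z \<and> \<not> R1 (t, q) z}"
  define O12 where "O12 = {q \<in> {lo..hi}. \<exists>t\<ge>0. strict R1 (t, q) z \<and> \<not> R2 (t, q) z}"
  have "q \<notin> O12" if "q \<in> O21" for q
  proof
    assume "q \<in> O12"
    with that obtain t t' where "q \<in> {lo..hi}" "0 \<le> t" "strict R2 (t, q) z" "\<not> R1 (t, q) z"
      "0 \<le> t'" "strict R1 (t', q) z" "\<not> R2 (t', q) z" unfolding O21_def O12_def by blast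
    then show False using opposite_disagreements_on_level[OF D(1,2), of t q t' z] lohi by auto
  qed
  then have "O21 \<inter> O12 = {}" by blast
  moreover have "openin (top_of_set {lo..hi}) O21" "openin (top_of_set {lo..hi}) O12"
    unfolding O21_def O12_def using openin_disagreement_levels D z lohi by auto
  moreover have "q1 \<in> O21" "q2 \<in> O12"
    unfolding O21_def O12_def lo_def hi_def using x1 x2 by auto
  ultimately obtain q where q: "q \<in> {lo..hi}" "q \<notin> O21" "q \<notin> O12"
    using connected_Icc[of lo hi] unfolding connected_openin by blast
  have "strict R2 (t1, q) z" if "q1 \<le> q2"
    using R2.strict_at_higher_quality[OF x1(1) _ _ x1(3)] that q lohi unfolding lo_def by simp
  moreover have "strict R1 (t2, q) z" if "\<not> q1 \<le> q2"
    using R1.strict_at_higher_quality[OF x2(1) _ _ x2(3)] that q lohi unfolding lo_def by simp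
  ultimately have "\<exists>t0\<ge>0. strict R2 (t0, q) z \<or> strict R1 (t0, q) z"
    using x1(1) x2(1) by (cases "q1 \<le> q2") auto
  then have "\<exists>t\<ge>0. strict R1 (t, q) z \<and> \<not> R2 (t, q) z \<or> strict R2 (t, q) z \<and> \<not> R1 (t, q) z"
    using disagree_on_level[OF D z] disagree_on_level[OF D(2,1) D(3)[symmetric] z] q lohi
    by (metis atLeastAtMost_iff order.trans order_le_less_trans)
  then show False using q unfolding O21_def O12_def by blast
qed

lemma values_quality_less_if_not_prec:
  assumes D: "R1 \<in> D" "R2 \<in> D" "R1 \<noteq> R2" and np: "\<not> prec R1 R2"
  obtains z where "z \<in> Zset" "0 < fst z" "0 < snd z" "values_quality_less R2 R1 z"
proof -
  interpret R1: preference R1 using preference D by blast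
  interpret R2: preference R2 using preference D by blast
  obtain z x where zx: "z \<in> Zset" "x \<in> box_pt z" "R2 x z" "\<not> R1 x z"
    using np D(3) unfolding prec_def by blast
  have "x \<noteq> z" using zx R1.refl by blast
  then obtain t1 q1 tz qz where xz: "x = (t1, q1)" "z = (tz, qz)" "t1 < tz" "q1 < qz" "(t1, q1) \<in> Zset"
    using zx(2) unfolding box_pt_def le_pt_def lt_pt_def by (cases x, cases z) auto
  obtain e where e: "e > 0" "\<And>y. y \<in> Zset \<Longrightarrow> dist y x < e \<Longrightarrow> \<not> R1 y z"
    using R1.not_weak_near_left[OF _ zx(1,4)] xz by auto
  obtain d where d: "0 < d" "d < e" "q1 + d < qz" using small_shift[OF e(1) xz(4)] .
  have y: "(t1, q1 + d) \<in> Zset" using xz zx(1) d by auto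
  have "\<not> R1 (t1, q1 + d) z" using e(2)[OF y] d xz by simp
  moreover have "strict R2 (t1, q1 + d) x"
    using R2.strict_greater_q[OF y, of q1] d xz by simp
  then have "strict R2 (t1, q1 + d) z" using R2.strict_trans_weak zx(3) by blast
  ultimately have "values_quality_less R2 R1 z"
    using y d xz unfolding values_quality_less_def by force
  moreover have "0 < fst z" "0 < snd z" using xz by auto
  ultimately show ?thesis using that zx(1) by blast
qed

lemma openin_values_quality_less:
  assumes "Ra \<in> D" "Rb \<in> D" "Z \<subseteq> Zset"
  shows "openin (top_of_set Z) {z \<in> Z. values_quality_less Ra Rb z}"
  unfolding openin_euclidean_subtopology_iff
proof (intro conjI ballI)
  fix z assume "z \<in> {z \<in> Z. values_quality_less Ra Rb z}"
  then obtain x where x: "z \<in> Z" "x \<in> Zset" "snd x < snd z" "strict Ra x z" "\<not> Rb x z"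
    unfolding values_quality_less_def by blast
  then obtain e where e: "e > 0" "\<And>y. y \<in> Zset \<Longrightarrow> dist y z < e \<Longrightarrow> strict Ra x y \<and> \<not> Rb x y"
    using disagree_near_right[OF assms(1,2)] assms(3) by blast
  show "\<exists>e>0. \<forall>y\<in>Z. dist y z < e \<longrightarrow> y \<in> {z \<in> Z. values_quality_less Ra Rb z}"
  proof (intro exI conjI ballI impI)
    fix y assume y: "y \<in> Z" "dist y z < min e (snd z - snd x)"
    then have "snd x < snd y"
      using dist_snd_le[of y z] by (auto simp: dist_real_def)
    then show "y \<in> {z \<in> Z. values_quality_less Ra Rb z}"
      using e(2)[of y] y x assms(3) unfolding values_quality_less_def by auto
  qed (use e x in auto)
qed auto

text \<open>If neither type precedes the other, the open quadrant splits into the two disjoint nonempty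
  open sets of points below which one type values quality less than the other.\<close>

theorem prec_total:
  assumes D: "R1 \<in> D" "R2 \<in> D" "R1 \<noteq> R2"
  shows "prec R1 R2 \<or> prec R2 R1"
proof (rule ccontr)
  define Q where "Q = {0 :: real<..} \<times> {0 :: real<..1}"
  have Q: "Q \<subseteq> Zset" "connected Q"
    unfolding Q_def by (auto intro!: convex_connected convex_Times)
  have memQ: "z \<in> Q \<longleftrightarrow> z \<in> Zset \<and> 0 < fst z \<and> 0 < snd z" for z
    unfolding Q_def by (cases z) auto
  assume "\<not> (prec R1 R2 \<or> prec R2 R1)"
  then obtain z1 z2 where "z1 \<in> Q" "values_quality_less R2 R1 z1" "z2 \<in> Q" "values_quality_less R1 R2 z2"
    using values_quality_less_if_not_prec[OF D] values_quality_less_if_not_prec[OF D(2,1) D(3)[symmetric]]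
    unfolding memQ by metis
  moreover have "Q \<subseteq> {z \<in> Q. values_quality_less R2 R1 z} \<union> {z \<in> Q. values_quality_less R1 R2 z}"
    using values_quality_less_cases[OF D] memQ by blast
  moreover have "{z \<in> Q. values_quality_less R2 R1 z} \<inter> {z \<in> Q. values_quality_less R1 R2 z} = {}"
    using values_quality_less_exclusive[OF D] Q(1) by blast
  ultimately show False
    using Q openin_values_quality_less[OF D(2,1) Q(1)] openin_values_quality_less[OF D(1,2) Q(1)]
    unfolding connected_openin by blast
qed

lemma prec_asym:
  assumes D: "R1 \<in> D" "R2 \<in> D" and "prec R1 R2"
  shows "\<not> prec R2 R1"
proof
  assume "prec R2 R1"
  obtain x where x: "x \<in> Zset" "lt_pt x (1, 1)" "indiff R1 x (1, 1)"
    using preference.exists_indiff_below[OF preference[OF D(1)], of 1 1] by auto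
  have "strict R2 (1, 1) x"
    using prec_strict_larger[OF D \<open>prec R1 R2\<close> x(1) _ x(2)] x(3) unfolding indiff_def by simp
  moreover have "strict R2 x (1, 1)"
    using prec_strict_smaller[OF D(2,1) \<open>prec R2 R1\<close> x(1) _ x(2)] x(3) unfolding indiff_def by simp
  ultimately show False unfolding strict_def by blast
qed

lemma prec_trans:
  assumes "R1 \<in> D" "R2 \<in> D" "R3 \<in> D" "prec R1 R2" "prec R2 R3"
  shows "prec R1 R3"
proof -
  have "R1 \<noteq> R3" using prec_asym assms by blast
  then show ?thesis using assms unfolding prec_def by blast
qed

lemma transp_on_prec: "transp_on D prec"
  by (rule transp_onI) (rule prec_trans)

lemma totalp_on_prec: "totalp_on D prec"
  by (rule totalp_onI) (rule prec_total)

lemma prec_separating_pair: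
  assumes D: "R \<in> D" "R' \<in> D" and "prec R R'"
  obtains x z where "x \<in> Zset" "z \<in> Zset" "lt_pt x z" "strict R x z" "strict R' z x"
proof -
  interpret R: preference R using preference D by blast
  interpret R': preference R' using preference D by blast
  obtain x where "x \<in> Zset" "lt_pt x (1, 1)" "indiff R x (1, 1)"
    using R.exists_indiff_below[of 1 1] by auto
  then obtain t1 q1 where x: "(t1, q1) \<in> Zset" "t1 < 1" "q1 < 1" "indiff R (t1, q1) (1, 1)"
    by (cases x) auto
  have "strict R' (1, 1) (t1, q1)"
    using prec_strict_larger[OF D \<open>prec R R'\<close> x(1)] x unfolding indiff_def by simp
  then obtain e where e: "e > 0" "\<And>y. y \<in> Zset \<Longrightarrow> dist y (t1, q1) < e \<Longrightarrow> \<not> R' y (1, 1)"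
    using R'.not_weak_near_left[OF x(1), of "(1, 1)"] unfolding strict_def by auto
  obtain d where d: "0 < d" "d < e" "q1 + d < 1" using small_shift[OF e(1) x(3)] .
  have y: "(t1, q1 + d) \<in> Zset" using x d by auto
  have "strict R' (1, 1) (t1, q1 + d)" using e(2)[OF y] d R'.strict_if_not_weak[OF y] by simp
  moreover have "strict R (t1, q1 + d) (1, 1)"
    using R.strict_trans_weak[OF R.strict_greater_q[OF y, of q1]] x d unfolding indiff_def by auto
  moreover have "lt_pt (t1, q1 + d) (1, 1)" using x d by simp
  ultimately show ?thesis using that[OF y, of "(1, 1)"] by simp
qed

lemma prec_between:
  assumes D: "R \<in> D" "R' \<in> D" "R'' \<in> D" and Z: "x \<in> Zset" "z \<in> Zset" "lt_pt x z"
    and "strict R x z" "strict R' z x" "indiff R'' x z"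
  shows "prec R R''" "prec R'' R'"
proof -
  have "R'' \<noteq> R" "R'' \<noteq> R'" using assms(7-9) unfolding strict_def indiff_def by auto
  moreover have "\<not> prec R'' R"
    using prec_strict_larger[OF D(3,1) _ Z] assms(7,9) unfolding indiff_def strict_def by blast
  moreover have "\<not> prec R' R''"
    using prec_strict_smaller[OF D(2,3) _ Z] assms(8,9) unfolding indiff_def strict_def by blast
  ultimately show "prec R R''" "prec R'' R'" using prec_total D by blast+
qed

lemma rational_separating_pair:
  assumes D: "R \<in> D" "R' \<in> D" and "prec R R'"
  obtains x z where "x \<in> Zset" "z \<in> Zset" "fst x \<in> \<rat>" "snd x \<in> \<rat>" "fst z \<in> \<rat>" "snd z \<in> \<rat>"
    "lt_pt x z" "strict R x z" "strict R' z x"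
proof -
  interpret R: preference R using preference D by blast
  interpret R': preference R' using preference D by blast
  obtain x z where xz: "x \<in> Zset" "z \<in> Zset" "lt_pt x z" "strict R x z" "strict R' z x"
    using prec_separating_pair[OF assms] .
  obtain e1 where e1: "e1 > 0" "\<And>y. y \<in> Zset \<Longrightarrow> dist y x < e1 \<Longrightarrow> \<not> R z y"
    using R.not_weak_near_right[OF xz(2,1)] xz(4) unfolding strict_def by blast
  obtain e2 where e2: "e2 > 0" "\<And>y. y \<in> Zset \<Longrightarrow> dist y x < e2 \<Longrightarrow> \<not> R' y z"
    using R'.not_weak_near_left[OF xz(1,2)] xz(5) unfolding strict_def by blast
  obtain e3 where e3: "e3 > 0" "\<And>y. dist y x < e3 \<Longrightarrow> lt_pt y z"
    using lt_pt_near[OF xz(3)] by (metis dist_self)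
  obtain x' where x': "x' \<in> Zset" "fst x' \<in> \<rat>" "snd x' \<in> \<rat>" "dist x' x < min (min e1 e2) e3"
    using rational_approx_Zset[OF xz(1), of "min (min e1 e2) e3"] e1 e2 e3 by auto
  have x'z: "lt_pt x' z" "strict R x' z" "strict R' z x'"
    using x' e1 e2 e3 R.strict_if_not_weak[OF xz(2) x'(1)] R'.strict_if_not_weak[OF x'(1) xz(2)] by auto
  obtain f1 where f1: "f1 > 0" "\<And>y. y \<in> Zset \<Longrightarrow> dist y z < f1 \<Longrightarrow> \<not> R y x'"
    using R.not_weak_near_left[OF xz(2) x'(1)] x'z(2) unfolding strict_def by blast
  obtain f2 where f2: "f2 > 0" "\<And>y. y \<in> Zset \<Longrightarrow> dist y z < f2 \<Longrightarrow> \<not> R' x' y"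
    using R'.not_weak_near_right[OF x'(1) xz(2)] x'z(3) unfolding strict_def by blast
  obtain f3 where f3: "f3 > 0" "\<And>y. dist y z < f3 \<Longrightarrow> lt_pt x' y"
    using lt_pt_near[OF x'z(1)] by (metis dist_self)
  obtain z' where z': "z' \<in> Zset" "fst z' \<in> \<rat>" "snd z' \<in> \<rat>" "dist z' z < min (min f1 f2) f3"
    using rational_approx_Zset[OF xz(2), of "min (min f1 f2) f3"] f1 f2 f3 by auto
  have "lt_pt x' z'" "strict R x' z'" "strict R' z' x'"
    using z' f1 f2 f3 R.strict_if_not_weak[OF z'(1) x'(1)] R'.strict_if_not_weak[OF x'(1) z'(1)] by auto
  then show ?thesis using that x' z' by blast
qed

lemma countable_dense_subset:
  obtains C where "C \<subseteq> D" "countable C"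
    "\<And>R R'. R \<in> D \<Longrightarrow> R' \<in> D \<Longrightarrow> prec R R' \<Longrightarrow> \<exists>c\<in>C. prec R c \<and> prec c R'"
proof
  define P where "P = {(x, z). x \<in> Zset \<and> z \<in> Zset \<and> fst x \<in> \<rat> \<and> snd x \<in> \<rat> \<and> fst z \<in> \<rat> \<and> snd z \<in> \<rat>
    \<and> lt_pt x z}"
  define choice where "choice = (\<lambda>(x, z). SOME R. R \<in> D \<and> indiff R x z)"
  have choice: "choice (x, z) \<in> D \<and> indiff (choice (x, z)) x z" if "(x, z) \<in> P" for x z
    using someI_ex[OF exists_indiff[unfolded Bex_def]] that unfolding P_def choice_def by auto
  show "choice ` P \<subseteq> D" using choice by auto
  have "P \<subseteq> (\<rat> \<times> \<rat>) \<times> (\<rat> \<times> \<rat>)" unfolding P_def by auto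
  then show "countable (choice ` P)"
    by (intro countable_image countable_subset[OF _ countable_SIGMA]) (auto simp: countable_rat)
  fix R R' assume RR': "R \<in> D" "R' \<in> D" "prec R R'"
  then obtain x z where "(x, z) \<in> P" "strict R x z" "strict R' z x"
    using rational_separating_pair unfolding P_def by (metis (mono_tags, lifting) case_prodI mem_Collect_eq)
  then show "\<exists>c\<in>choice ` P. prec R c \<and> prec c R'"
    using prec_between[OF RR'(1,2)] choice unfolding P_def by blast
qed


lemma approach_from_above:
  assumes s: "s \<in> D" "T \<in> D" "prec s T"
  obtains S where "\<And>n. S n \<in> D \<and> prec s (S n) \<and> prec (S n) T" "monotone_seq S" "order_converges D S s"
proof -
  obtain C where C: "C \<subseteq> D" "countable C"
    "\<And>R R'. R \<in> D \<Longrightarrow> R' \<in> D \<Longrightarrow> prec R R' \<Longrightarrow> \<exists>c\<in>C. prec R c \<and> prec c R'"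
    using countable_dense_subset by blast
  obtain S where S: "\<And>n. S n \<in> D \<and> prec s (S n) \<and> prec (S n) T"
    "\<And>n. S (Suc n) = S n \<or> prec (S (Suc n)) (S n)"
    "\<And>b. b \<in> D \<Longrightarrow> prec s b \<Longrightarrow> \<forall>\<^sub>F n in sequentially. prec (S n) b"
    by (rule countable_dense_approach[OF transp_on_prec totalp_on_prec C(1,2) _ s(1,2)])
      (use C(3) s(3) in blast)+
  have "monotone_seq S" using S(2) unfolding monotone_seq_def preceq_def by metis
  moreover have "order_converges D S s"
    unfolding order_converges_def using S prec_trans[OF _ s(1)] by (auto intro: always_eventually)
  ultimately show ?thesis using that S(1) by blast
qed

lemma approach_from_below:
  assumes s: "s \<in> D" "T \<in> D" "prec T s"
  obtains S where "\<And>n. S n \<in> D \<and> prec (S n) s \<and> prec T (S n)" "monotone_seq S" "order_converges D S s"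
proof -
  obtain C where C: "C \<subseteq> D" "countable C"
    "\<And>R R'. R \<in> D \<Longrightarrow> R' \<in> D \<Longrightarrow> prec R R' \<Longrightarrow> \<exists>c\<in>C. prec R c \<and> prec c R'"
    using countable_dense_subset by blast
  have dense: "\<exists>c\<in>C. prec\<inverse>\<inverse> R c \<and> prec\<inverse>\<inverse> c R'" if "R \<in> D" "R' \<in> D" "prec\<inverse>\<inverse> R R'" for R R'
    using C(3)[of R' R] that by auto
  have order: "transp_on D prec\<inverse>\<inverse>" "totalp_on D prec\<inverse>\<inverse>"
    using transp_on_prec totalp_on_prec by (auto simp: totalp_on_def)
  obtain S where S: "\<And>n. S n \<in> D \<and> prec (S n) s \<and> prec T (S n)"
    "\<And>n. S (Suc n) = S n \<or> prec (S n) (S (Suc n))"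
    "\<And>b. b \<in> D \<Longrightarrow> prec b s \<Longrightarrow> \<forall>\<^sub>F n in sequentially. prec b (S n)"
    by (rule countable_dense_approach[OF order C(1,2) _ s(1,2)]) (use dense s(3) in auto)
  have "monotone_seq S" using S(2) unfolding monotone_seq_def preceq_def by metis
  moreover have "order_converges D S s"
    unfolding order_converges_def using S prec_trans[OF _ s(1)] by (auto intro: always_eventually)
  ultimately show ?thesis using that S(1) by blast
qed

definition accepted_payments :: "pref set \<Rightarrow> real \<Rightarrow> real set" where
  "accepted_payments B q = {t. \<exists>T\<in>B. T (t, q) (1, 1)}"

lemma accepted_below_one:
  assumes "R \<in> D" "q < 1" "R (t, q) (1, 1)"
  shows "0 \<le> t" "t < 1"
proof -
  interpret R: preference R using preference assms(1) by blast
  show "0 \<le> t" using R.in_Zset[OF assms(3)] by simp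
  show "t < 1"
  proof (rule ccontr)
    assume "\<not> t < 1"
    then have "strict R (1, 1) (t, q)"
      using R.strict_dominance[of 1 1 t q] R.in_Zset[OF assms(3)] assms(2) by simp
    then show False using assms(3) unfolding strict_def by blast
  qed
qed

lemma bdd_above_accepted_payments:
  assumes "B \<subseteq> D" "q < 1"
  shows "bdd_above (accepted_payments B q)"
proof (rule bdd_aboveI[of _ 1])
  fix t assume "t \<in> accepted_payments B q"
  then obtain T where "T \<in> B" "T (t, q) (1, 1)" unfolding accepted_payments_def by blast
  then show "t \<le> 1" using accepted_below_one(2)[of T q t] assms by auto
qed

lemma rejects_Sup_accepted_payments:
  assumes B: "B \<subseteq> D" "\<And>T. T \<in> B \<Longrightarrow> \<exists>T'\<in>B. prec T' T" and q: "0 \<le> q" "q < 1" and T: "T \<in> B"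
  shows "\<not> T (Sup (accepted_payments B q), q) (1, 1)"
proof
  assume T_accepts: "T (Sup (accepted_payments B q), q) (1, 1)"
  obtain T' where T': "T' \<in> B" "prec T' T" using B(2)[OF T] by blast
  interpret T': preference T' using preference T' B by blast
  let ?w = "Sup (accepted_payments B q)"
  have w: "0 \<le> ?w" "?w < 1"
    using accepted_below_one[of T q ?w] q(2) T_accepts T B by auto
  then have "strict T' (?w, q) (1, 1)"
    using prec_strict_smaller[OF _ _ T'(2) _ _ _ T_accepts] T T' B q by auto
  then obtain e where e: "e > 0" "\<And>y. y \<in> Zset \<Longrightarrow> dist y (?w, q) < e \<Longrightarrow> \<not> T' (1, 1) y"
    using T'.not_weak_near_right[of "(1, 1)" "(?w, q)"] w q unfolding strict_def by auto
  moreover have shifted: "(?w + e/2, q) \<in> Zset" "dist (?w + e/2, q) (?w, q) < e" using e(1) w q by auto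
  ultimately have "\<not> T' (1, 1) (?w + e/2, q)" by blast
  then have "T' (?w + e/2, q) (1, 1)" using T'.total[OF shifted(1), of "(1, 1)"] by simp
  then have "?w + e/2 \<in> accepted_payments B q" using T' unfolding accepted_payments_def by blast
  then have "?w + e/2 \<le> ?w" by (rule cSup_upper[OF _ bdd_above_accepted_payments[OF B(1) q(2)]])
  then show False using e(1) by simp
qed

lemma accepts_Sup_accepted_payments:
  assumes "R \<in> D" "B \<subseteq> D" "\<And>T. T \<in> B \<Longrightarrow> prec R T" "0 \<le> q" "q < 1"
    "accepted_payments B q \<noteq> {}"
  shows "R (Sup (accepted_payments B q), q) (1, 1)"
proof -
  interpret R: preference R using preference assms(1) by blast
  have "accepted_payments B q \<subseteq> {t. R (t, q) (1, 1)}"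
  proof
    fix t assume "t \<in> accepted_payments B q"
    then obtain T where T: "T \<in> B" "T (t, q) (1, 1)" unfolding accepted_payments_def by blast
    then have "0 \<le> t" "t < 1" using accepted_below_one assms(2,5) by blast+
    then show "t \<in> {t. R (t, q) (1, 1)}"
      using prec_weak[OF assms(3)[OF T(1)] _ _ _ T(2)] assms(4,5) by simp
  qed
  moreover have "closed {t. R (t, q) (1, 1)}" by (rule R.closed_upper_level) simp
  ultimately have "closure (accepted_payments B q) \<subseteq> {t. R (t, q) (1, 1)}"
    by (rule closure_minimal)
  moreover have "Sup (accepted_payments B q) \<in> closure (accepted_payments B q)"
    using closure_contains_Sup[OF assms(6) bdd_above_accepted_payments[OF assms(2,5)]] .
  ultimately show ?thesis by blast
qed

text \<open>No Dedekind gaps: the supremum w of the payments at which types of the upper part accept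
  a bundle of quality q in exchange for (1, 1) is rejected by every upper type and accepted by every
  lower type, so a type indifferent at w fits in neither part.\<close>

lemma no_gap:
  assumes AB: "A \<subseteq> D" "B \<subseteq> D" "D \<subseteq> A \<union> B" "a0 \<in> A" "b0 \<in> B"
    and below: "\<And>R T. R \<in> A \<Longrightarrow> T \<in> B \<Longrightarrow> prec R T"
    and no_max: "\<And>R. R \<in> A \<Longrightarrow> \<exists>R'\<in>A. prec R R'"
    and no_min: "\<And>T. T \<in> B \<Longrightarrow> \<exists>T'\<in>B. prec T' T"
  shows False
proof -
  obtain q where q: "0 \<le> q" "q < 1" "strict b0 (0, q) (1, 1)"
    using preference.strictly_better_below[OF preference, of b0 1 1] AB by auto
  define w where "w = Sup (accepted_payments B q)"
  have "accepted_payments B q \<noteq> {}" using q AB unfolding accepted_payments_def strict_def by blast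
  then have A_accepts: "R (w, q) (1, 1)" if "R \<in> A" for R
    using accepts_Sup_accepted_payments below that AB q unfolding w_def by blast
  have w: "0 \<le> w" "w < 1" using accepted_below_one[of a0 q w] q(2) A_accepts AB by auto
  then obtain Rw where Rw: "Rw \<in> D" "indiff Rw (w, q) (1, 1)"
    using exists_indiff[of "(w, q)" "(1, 1)"] q by auto
  show False
  proof (cases "Rw \<in> A")
    case True
    then obtain R' where R': "R' \<in> A" "prec Rw R'" using no_max by blast
    then have "strict Rw (w, q) (1, 1)"
      using prec_strict_smaller[OF Rw(1) _ R'(2) _ _ _ A_accepts[OF R'(1)]] w q AB by auto
    then show False using Rw unfolding strict_def indiff_def by blast
  next
    case False
    then show False
      using rejects_Sup_accepted_payments[OF AB(2) no_min q(1,2)] Rw AB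
      unfolding w_def indiff_def by blast
  qed
qed

end

section \<open>Monotone mechanisms with continuous indirect utility\<close>

locale mechanism = rsc_domain D for D +
  fixes F :: "pref \<Rightarrow> pt"
  assumes F_in_Zset: "\<forall>R\<in>D. F R \<in> Zset"
    and monotone: "monotone_mech D F"
    and continuous: "VF_continuous D F"
    and range_closed: "closedin (top_of_set Zset) (F ` D)"
    and range_limpts_finite: "finite {x. x islimpt (F ` D)}"
begin

definition no_gain_up :: "pt \<Rightarrow> pt \<Rightarrow> bool" where
  "no_gain_up a b \<longleftrightarrow> (\<forall>R\<in>D. F R = a \<longrightarrow> R a b)"

definition no_gain_down :: "pt \<Rightarrow> pt \<Rightarrow> bool" where
  "no_gain_down a b \<longleftrightarrow> (\<forall>T\<in>D. F T = b \<longrightarrow> T b a)"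

definition consecutive :: "pt \<Rightarrow> pt \<Rightarrow> bool" where
  "consecutive a b \<longleftrightarrow> a \<in> F ` D \<and> b \<in> F ` D \<and> lt_pt a b \<and> \<not> (\<exists>c\<in>F ` D. lt_pt a c \<and> lt_pt c b)"

lemma le_F_if_prec: "R \<in> D \<Longrightarrow> T \<in> D \<Longrightarrow> prec R T \<Longrightarrow> le_pt (F R) (F T)"
  using monotone unfolding monotone_mech_def by blast

lemma prec_if_F_less:
  assumes "R \<in> D" "T \<in> D" "lt_pt (F R) (F T)"
  shows "prec R T"
proof -
  have "R \<noteq> T" using assms(3) lt_pt_irrefl by metis
  moreover have "\<not> prec T R" using le_F_if_prec[of T R] assms le_lt_pt_trans lt_pt_irrefl by blast
  ultimately show ?thesis using prec_total assms by blast
qed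

lemma F_trichotomy:
  assumes "R \<in> D" "T \<in> D"
  shows "F R = F T \<or> lt_pt (F R) (F T) \<or> lt_pt (F T) (F R)"
proof (cases "R = T")
  case False
  then have "prec R T \<or> prec T R" using prec_total assms by blast
  then have "le_pt (F R) (F T) \<or> le_pt (F T) (F R)" using le_F_if_prec assms by blast
  then show ?thesis unfolding le_pt_def by auto
qed simp

lemma consecutive_cases:
  assumes "consecutive a b" "R \<in> D"
  shows "le_pt (F R) a \<or> le_pt b (F R)"
proof -
  obtain Ra Rb where "Ra \<in> D" "F Ra = a" "Rb \<in> D" "F Rb = b"
    using assms(1) unfolding consecutive_def by blast
  moreover have "\<not> (lt_pt a (F R) \<and> lt_pt (F R) b)"
    using assms unfolding consecutive_def by blast
  ultimately show ?thesis
    using F_trichotomy[OF assms(2), of Ra] F_trichotomy[OF assms(2), of Rb] unfolding le_pt_def by auto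
qed

lemma indiff_at_limit:
  assumes "s \<in> D" "\<And>n. S n \<in> D" "monotone_seq S" "order_converges D S s" "\<And>n. F (S n) = c"
  shows "indiff s c (F s)"
proof -
  have "\<forall>n. S n \<in> D" using assms(2) by blast
  then obtain L where L: "(\<lambda>n. F (S n)) \<longlonglongrightarrow> L" "indiff s L (F s)"
    using continuous[unfolded VF_continuous_def, rule_format, OF assms(1) _ assms(3,4)] by blast
  moreover have "(\<lambda>n. F (S n)) \<longlonglongrightarrow> c" using assms(5) by simp
  ultimately show ?thesis using LIMSEQ_unique[OF L(1)] by simp
qed

lemma F_eq_right_if_consecutive:
  assumes "consecutive a b" "R \<in> D" "F R \<noteq> a" "le_pt a (F R)" "le_pt (F R) b"
  shows "F R = b"
  using consecutive_cases[OF assms(1,2)] assms(3-5) unfolding le_pt_def lt_pt_def by auto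

lemma F_eq_left_if_consecutive:
  assumes "consecutive a b" "R \<in> D" "F R \<noteq> b" "le_pt a (F R)" "le_pt (F R) b"
  shows "F R = a"
  using consecutive_cases[OF assms(1,2)] assms(3-5) unfolding le_pt_def lt_pt_def by auto

text \<open>Continuity of the indirect utility along types approaching s from above, all of which
  receive b.\<close>

lemma indiff_at_last_type:
  assumes c: "consecutive a b" and s: "s \<in> D" "F s = a" "\<And>R. R \<in> D \<Longrightarrow> F R = a \<Longrightarrow> preceq R s"
  shows "indiff s a b"
proof -
  obtain Rb where Rb: "Rb \<in> D" "F Rb = b" using c unfolding consecutive_def by blast
  then have "prec s Rb" using prec_if_F_less[OF s(1) Rb(1)] s(2) c unfolding consecutive_def by simp
  obtain S where S: "\<And>n. S n \<in> D \<and> prec s (S n) \<and> prec (S n) Rb" "monotone_seq S" "order_converges D S s"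
    by (rule approach_from_above[OF s(1) Rb(1) \<open>prec s Rb\<close>]) blast
  have "F (S n) = b" for n
  proof (rule F_eq_right_if_consecutive[OF c])
    show "F (S n) \<noteq> a" using S(1)[of n] s prec_asym unfolding preceq_def by blast
    show "le_pt a (F (S n))" "le_pt (F (S n)) b" using le_F_if_prec S(1)[of n] s Rb by blast+
  qed (use S in blast)
  then have "indiff s b (F s)" using indiff_at_limit[OF s(1) _ S(2,3)] S(1) by blast
  then show ?thesis using s(2) unfolding indiff_def by blast
qed

lemma indiff_at_first_type:
  assumes c: "consecutive a b" and s: "s \<in> D" "F s = b" "\<And>T. T \<in> D \<Longrightarrow> F T = b \<Longrightarrow> preceq s T"
  shows "indiff s a b"
proof -
  obtain Ra where Ra: "Ra \<in> D" "F Ra = a" using c unfolding consecutive_def by blast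
  then have "prec Ra s" using prec_if_F_less[OF Ra(1) s(1)] s(2) c unfolding consecutive_def by simp
  obtain S where S: "\<And>n. S n \<in> D \<and> prec (S n) s \<and> prec Ra (S n)" "monotone_seq S" "order_converges D S s"
    by (rule approach_from_below[OF s(1) Ra(1) \<open>prec Ra s\<close>]) blast
  have "F (S n) = a" for n
  proof (rule F_eq_left_if_consecutive[OF c])
    show "F (S n) \<noteq> b" using S(1)[of n] s prec_asym unfolding preceq_def by blast
    show "le_pt a (F (S n))" "le_pt (F (S n)) b" using le_F_if_prec S(1)[of n] s Ra by blast+
  qed (use S in blast)
  then have "indiff s a (F s)" using indiff_at_limit[OF s(1) _ S(2,3)] S(1) by blast
  then show ?thesis using s(2) by simp
qed

lemma prec_across_consecutive:
  assumes "consecutive a b" "R \<in> D" "T \<in> D" "le_pt (F R) a" "le_pt b (F T)"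
  shows "prec R T"
  using prec_if_F_less[OF assms(2,3)] assms(1,4,5) le_lt_pt_trans lt_le_pt_trans
  unfolding consecutive_def by blast

lemma last_or_first_type:
  assumes c: "consecutive a b"
  shows "(\<exists>s\<in>D. F s = a \<and> (\<forall>R\<in>D. F R = a \<longrightarrow> preceq R s))
    \<or> (\<exists>s\<in>D. F s = b \<and> (\<forall>T\<in>D. F T = b \<longrightarrow> preceq s T))"
proof (rule ccontr)
  assume neither: "\<not> ?thesis"
  have no_last: "\<exists>R'\<in>D. F R' = a \<and> prec R R'" if "R \<in> D" "F R = a" for R
    using neither that prec_total unfolding preceq_def by blast
  have no_first: "\<exists>T'\<in>D. F T' = b \<and> prec T' T" if "T \<in> D" "F T = b" for T
    using neither that prec_total unfolding preceq_def by blast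
  obtain Ra Rb where ab: "Ra \<in> D" "F Ra = a" "Rb \<in> D" "F Rb = b"
    using c unfolding consecutive_def by blast
  show False
  proof (rule no_gap[of "{R \<in> D. le_pt (F R) a}" "{T \<in> D. le_pt b (F T)}" Ra Rb])
    show "D \<subseteq> {R \<in> D. le_pt (F R) a} \<union> {T \<in> D. le_pt b (F T)}" using consecutive_cases[OF c] by blast
    show "\<exists>R'\<in>{R \<in> D. le_pt (F R) a}. prec R R'" if "R \<in> {R \<in> D. le_pt (F R) a}" for R
      using that no_last prec_if_F_less[OF _ ab(1)] ab unfolding le_pt_def by fastforce
    show "\<exists>T'\<in>{T \<in> D. le_pt b (F T)}. prec T' T" if "T \<in> {T \<in> D. le_pt b (F T)}" for T
      using that no_first prec_if_F_less[OF ab(3)] ab unfolding le_pt_def by fastforce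
  qed (use ab prec_across_consecutive[OF c] in \<open>auto simp: le_pt_def\<close>)
qed

lemma boundary_type:
  assumes c: "consecutive a b"
  obtains s where "s \<in> D" "indiff s a b" "\<And>R. R \<in> D \<Longrightarrow> F R = a \<Longrightarrow> preceq R s"
    "\<And>T. T \<in> D \<Longrightarrow> F T = b \<Longrightarrow> preceq s T"
  using last_or_first_type[OF c]
proof
  assume "\<exists>s\<in>D. F s = a \<and> (\<forall>R\<in>D. F R = a \<longrightarrow> preceq R s)"
  then obtain s where s: "s \<in> D" "F s = a" "\<And>R. R \<in> D \<Longrightarrow> F R = a \<Longrightarrow> preceq R s" by blast
  moreover have "preceq s T" if "T \<in> D" "F T = b" for T
    using prec_across_consecutive[OF c s(1) that(1)] s(2) that(2) unfolding le_pt_def preceq_def by simp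
  ultimately show ?thesis using that indiff_at_last_type[OF c] by blast
next
  assume "\<exists>s\<in>D. F s = b \<and> (\<forall>T\<in>D. F T = b \<longrightarrow> preceq s T)"
  then obtain s where s: "s \<in> D" "F s = b" "\<And>T. T \<in> D \<Longrightarrow> F T = b \<Longrightarrow> preceq s T" by blast
  moreover have "preceq R s" if "R \<in> D" "F R = a" for R
    using prec_across_consecutive[OF c that(1) s(1)] s(2) that(2) unfolding le_pt_def preceq_def by simp
  ultimately show ?thesis using that indiff_at_first_type[OF c] by blast
qed

lemma range_in_Zset: "a \<in> F ` D \<Longrightarrow> a \<in> Zset"
  using F_in_Zset by blast

lemma consecutive_no_gain:
  assumes c: "consecutive a b"
  shows "no_gain_up a b" "no_gain_down a b"
proof -
  obtain s where s: "s \<in> D" "indiff s a b" "\<And>R. R \<in> D \<Longrightarrow> F R = a \<Longrightarrow> preceq R s"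
    "\<And>T. T \<in> D \<Longrightarrow> F T = b \<Longrightarrow> preceq s T"
    using boundary_type[OF c] by blast
  have ab: "a \<in> Zset" "b \<in> Zset" "lt_pt a b" using c range_in_Zset unfolding consecutive_def by auto
  show "no_gain_up a b" unfolding no_gain_up_def
  proof (intro ballI impI)
    fix R assume "R \<in> D" "F R = a"
    then have "R = s \<or> prec R s" using s(3) unfolding preceq_def by blast
    then show "R a b" using prec_weak[OF _ ab(2,1,3)] s(2) unfolding indiff_def by blast
  qed
  show "no_gain_down a b" unfolding no_gain_down_def
  proof (intro ballI impI)
    fix T assume "T \<in> D" "F T = b"
    then have "T = s \<or> prec s T" using s(4) unfolding preceq_def by blast
    then show "T b a"
      using prec_strict_larger[OF s(1) \<open>T \<in> D\<close> _ ab] s(2) unfolding indiff_def strict_def by blast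
  qed
qed

lemma no_gain_up_trans:
  assumes "a \<in> F ` D" "b \<in> F ` D" "c \<in> F ` D" "lt_pt a b" "lt_pt b c"
    and "no_gain_up a b" "no_gain_up b c"
  shows "no_gain_up a c"
  unfolding no_gain_up_def
proof (intro ballI impI)
  fix R assume R: "R \<in> D" "F R = a"
  obtain Rb where Rb: "Rb \<in> D" "F Rb = b" using assms(2) by blast
  have "prec R Rb" using prec_if_F_less[OF R(1) Rb(1)] R(2) Rb(2) assms(4) by simp
  moreover have "Rb b c" using assms(7) Rb unfolding no_gain_up_def by blast
  ultimately have "R b c" using prec_weak range_in_Zset assms(2,3,5) by blast
  then show "R a c" using preference.trans[OF preference[OF R(1)]] assms(6) R unfolding no_gain_up_def by blast
qed

lemma no_gain_down_trans:
  assumes "a \<in> F ` D" "b \<in> F ` D" "c \<in> F ` D" "lt_pt a b" "lt_pt b c"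
    and "no_gain_down a b" "no_gain_down b c"
  shows "no_gain_down a c"
  unfolding no_gain_down_def
proof (intro ballI impI)
  fix T assume T: "T \<in> D" "F T = c"
  obtain Rb where Rb: "Rb \<in> D" "F Rb = b" using assms(2) by blast
  have "prec Rb T" using prec_if_F_less[OF Rb(1) T(1)] T(2) Rb(2) assms(5) by simp
  moreover have "Rb b a" using assms(6) Rb unfolding no_gain_down_def by blast
  ultimately have "strict T b a" using prec_strict_larger[OF Rb(1) T(1)] range_in_Zset assms(1,2,4) by blast
  then show "T c a"
    using preference.trans[OF preference[OF T(1)]] assms(7) T unfolding no_gain_down_def strict_def by blast
qed

lemma no_gain_up_limit_right:
  assumes "a \<in> F ` D" "X \<longlonglongrightarrow> b" "\<And>n. no_gain_up a (X n)"
  shows "no_gain_up a b"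
  unfolding no_gain_up_def
proof (intro ballI impI)
  fix R assume R: "R \<in> D" "F R = a"
  have "X n \<in> {y \<in> Zset. R a y}" for n
    using assms(3) R preference.in_Zset[OF preference[OF R(1)]] unfolding no_gain_up_def by blast
  then have "b \<in> {y \<in> Zset. R a y}"
    using closed_sequentially[OF preference.closed_lower[OF preference[OF R(1)]] _ assms(2)]
      assms(1) range_in_Zset by blast
  then show "R a b" by simp
qed

lemma no_gain_down_limit_left:
  assumes "b \<in> F ` D" "X \<longlonglongrightarrow> a" "\<And>n. no_gain_down (X n) b"
  shows "no_gain_down a b"
  unfolding no_gain_down_def
proof (intro ballI impI)
  fix T assume T: "T \<in> D" "F T = b"
  have "X n \<in> {y \<in> Zset. T b y}" for n
    using assms(3) T preference.in_Zset[OF preference[OF T(1)]] unfolding no_gain_down_def by blast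
  then have "a \<in> {y \<in> Zset. T b y}"
    using closed_sequentially[OF preference.closed_lower[OF preference[OF T(1)]] _ assms(2)]
      assms(1) range_in_Zset by blast
  then show "T b a" by simp
qed

lemma no_gain_up_limit_left:
  assumes "a \<in> F ` D" "b \<in> F ` D" "\<And>n. X n \<in> F ` D" "\<And>n. lt_pt a (X n)" "\<And>n. lt_pt (X n) b"
    and "X \<longlonglongrightarrow> a" "\<And>n. no_gain_up (X n) b"
  shows "no_gain_up a b"
  unfolding no_gain_up_def
proof (intro ballI impI)
  fix R assume R: "R \<in> D" "F R = a"
  have "X n \<in> {y \<in> Zset. R y b}" for n
  proof -
    obtain Rn where Rn: "Rn \<in> D" "F Rn = X n" using assms(3)[of n] by auto
    then have "prec R Rn" using prec_if_F_less[OF R(1) Rn(1)] R assms(4) by simp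
    then have "R (X n) b"
      using prec_weak Rn assms(2,3,5,7) range_in_Zset unfolding no_gain_up_def by blast
    then show ?thesis using assms(3) range_in_Zset by blast
  qed
  then have "a \<in> {y \<in> Zset. R y b}"
    using closed_sequentially[OF preference.closed_upper[OF preference[OF R(1)]] _ assms(6)]
      assms(2) range_in_Zset by blast
  then show "R a b" by simp
qed

lemma no_gain_down_limit_right:
  assumes "a \<in> F ` D" "b \<in> F ` D" "\<And>n. X n \<in> F ` D" "\<And>n. lt_pt a (X n)" "\<And>n. lt_pt (X n) b"
    and "X \<longlonglongrightarrow> b" "\<And>n. no_gain_down a (X n)"
  shows "no_gain_down a b"
  unfolding no_gain_down_def
proof (intro ballI impI)
  fix T assume T: "T \<in> D" "F T = b"
  have "X n \<in> {y \<in> Zset. T y a}" for n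
  proof -
    obtain Tn where Tn: "Tn \<in> D" "F Tn = X n" using assms(3)[of n] by auto
    then have "prec Tn T" using prec_if_F_less[OF Tn(1) T(1)] T assms(5) by simp
    then have "strict T (X n) a"
      using prec_strict_larger[OF Tn(1) T(1)] Tn assms(1,3,4,7) range_in_Zset
      unfolding no_gain_down_def by blast
    then show ?thesis using assms(3) range_in_Zset unfolding strict_def by blast
  qed
  then have "b \<in> {y \<in> Zset. T y a}"
    using closed_sequentially[OF preference.closed_upper[OF preference[OF T(1)]] _ assms(6)]
      assms(1) range_in_Zset by blast
  then show "T b a" by simp
qed

lemma range_lt_if_fst_less: "a \<in> F ` D \<Longrightarrow> b \<in> F ` D \<Longrightarrow> fst a < fst b \<Longrightarrow> lt_pt a b"
  using F_trichotomy unfolding lt_pt_def by fastforce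

lemma inj_on_fst_range: "inj_on fst (F ` D)"
proof (rule inj_onI)
  fix a b assume "a \<in> F ` D" "b \<in> F ` D" "fst a = fst b"
  then show "a = b" using F_trichotomy unfolding lt_pt_def by force
qed

text \<open>The range is a chain for the product order, so it is the graph of a function of the first
  coordinate; induction over outcomes is carried out on the first coordinates.\<close>

definition outcome_at :: "real \<Rightarrow> pt" where
  "outcome_at = inv_into (F ` D) fst"

lemma outcome_at_fst: "a \<in> F ` D \<Longrightarrow> outcome_at (fst a) = a"
  unfolding outcome_at_def by (rule inv_into_f_f[OF inj_on_fst_range])

lemma outcome_at:
  assumes "u \<in> fst ` F ` D"
  shows "outcome_at u \<in> F ` D" "fst (outcome_at u) = u"
proof -
  obtain a where "a \<in> F ` D" "u = fst a" using assms by blast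
  then show "outcome_at u \<in> F ` D" "fst (outcome_at u) = u" using outcome_at_fst by simp_all
qed

lemma outcome_at_less:
  "u \<in> fst ` F ` D \<Longrightarrow> v \<in> fst ` F ` D \<Longrightarrow> u < v \<Longrightarrow> lt_pt (outcome_at u) (outcome_at v)"
  by (rule range_lt_if_fst_less) (simp_all add: outcome_at)

lemma closed_range: "closed (F ` D)"
  using closedin_closed_trans[OF range_closed closed_Zset] .

lemma compact_range_slice: "compact (F ` D \<inter> {x. fst x \<le> c})"
proof -
  have "F ` D \<inter> {x. fst x \<le> c} \<subseteq> cbox 0 c \<times> cbox 0 1"
  proof
    fix x assume "x \<in> F ` D \<inter> {x. fst x \<le> c}"
    then have "x \<in> Zset" "fst x \<le> c" using range_in_Zset by auto
    then show "x \<in> cbox 0 c \<times> cbox 0 1" by (cases x) simp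
  qed
  then have "bounded (F ` D \<inter> {x. fst x \<le> c})"
    by (rule bounded_subset[OF bounded_Times[OF bounded_cbox bounded_cbox]])
  moreover have "closed (F ` D \<inter> {x. fst x \<le> c})"
    by (intro closed_Int closed_range closed_Collect_le continuous_intros)
  ultimately show ?thesis by (simp add: compact_eq_bounded_closed)
qed

lemma eventually_in_fst_slice:
  assumes "\<And>n. f n \<in> fst ` F ` D" "f \<longlonglongrightarrow> l"
  shows "\<forall>\<^sub>F n in sequentially. f n \<in> fst ` (F ` D \<inter> {x. fst x \<le> l + 1})"
proof -
  have "\<forall>\<^sub>F n in sequentially. f n < l + 1" using assms(2) by (rule order_tendstoD) simp
  then show ?thesis
  proof (rule eventually_mono)
    fix n assume "f n < l + 1"
    then show "f n \<in> fst ` (F ` D \<inter> {x. fst x \<le> l + 1})"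
      using outcome_at[OF assms(1)] by (intro image_eqI[of _ _ "outcome_at (f n)"]) auto
  qed
qed

lemma tendsto_outcome_at:
  assumes "\<And>n. f n \<in> fst ` F ` D" "l \<in> fst ` F ` D" "f \<longlonglongrightarrow> l"
  shows "(\<lambda>n. outcome_at (f n)) \<longlonglongrightarrow> outcome_at l"
proof -
  let ?K = "F ` D \<inter> {x. fst x \<le> l + 1}"
  have "continuous_on (fst ` ?K) outcome_at"
    by (rule continuous_on_inv[OF continuous_on_fst[OF continuous_on_id] compact_range_slice])
      (simp add: outcome_at_fst)
  moreover have "l \<in> fst ` ?K"
    using outcome_at[OF assms(2)] by (intro image_eqI[of _ _ "outcome_at l"]) auto
  ultimately show ?thesis
    by (rule continuous_on_tendsto_compose[OF _ assms(3) _ eventually_in_fst_slice[OF assms(1,3)]])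
qed

lemma closed_fst_range: "closed (fst ` F ` D)"
  unfolding closed_sequential_limits
proof (intro allI impI)
  fix f l assume f: "(\<forall>n. f n \<in> fst ` F ` D) \<and> f \<longlonglongrightarrow> l"
  have "closed (fst ` (F ` D \<inter> {x. fst x \<le> l + 1}))"
    by (intro compact_imp_closed compact_continuous_image continuous_on_fst continuous_on_id
        compact_range_slice)
  moreover have "\<forall>\<^sub>F n in sequentially. f n \<in> fst ` (F ` D \<inter> {x. fst x \<le> l + 1})"
    using eventually_in_fst_slice f by blast
  ultimately have "l \<in> fst ` (F ` D \<inter> {x. fst x \<le> l + 1})"
    using Lim_in_closed_set[OF _ _ sequentially_bot] f by blast
  then show "l \<in> fst ` F ` D" by blast
qed

lemma finite_limpt_fst_range: "finite {u. u islimpt (fst ` F ` D)}"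
proof (rule finite_subset[OF _ finite_imageI[OF range_limpts_finite]])
  show "{u. u islimpt (fst ` F ` D)} \<subseteq> fst ` {x. x islimpt (F ` D)}"
  proof
    fix u assume "u \<in> {u. u islimpt (fst ` F ` D)}"
    then have u: "u islimpt (fst ` F ` D)" by simp
    then have "u \<in> fst ` F ` D" using closed_fst_range closed_limpt by blast
    moreover obtain f where f: "\<And>n. f n \<in> fst ` F ` D - {u}" "f \<longlonglongrightarrow> u"
      using u unfolding islimpt_sequential by blast
    ultimately have "(\<lambda>n. outcome_at (f n)) \<longlonglongrightarrow> outcome_at u"
      using tendsto_outcome_at by blast
    moreover have "outcome_at (f n) \<in> F ` D - {outcome_at u}" for n
      using outcome_at f(1)[of n] \<open>u \<in> fst ` F ` D\<close> by (metis DiffD1 DiffD2 DiffI singletonD singletonI)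
    ultimately have "outcome_at u islimpt (F ` D)"
      unfolding islimpt_sequential by (intro exI[of _ "\<lambda>n. outcome_at (f n)"]) blast
    then show "u \<in> fst ` {x. x islimpt (F ` D)}" using outcome_at[OF \<open>u \<in> fst ` F ` D\<close>] by force
  qed
qed

lemma consecutive_outcome_at:
  assumes "u \<in> fst ` F ` D" "v \<in> fst ` F ` D" "u < v" "fst ` F ` D \<inter> {u<..<v} = {}"
  shows "consecutive (outcome_at u) (outcome_at v)"
  unfolding consecutive_def
proof (intro conjI)
  show "outcome_at u \<in> F ` D" "outcome_at v \<in> F ` D" using outcome_at assms(1,2) by blast+
  show "lt_pt (outcome_at u) (outcome_at v)" using outcome_at_less assms(1-3) .
  show "\<not> (\<exists>c\<in>F ` D. lt_pt (outcome_at u) c \<and> lt_pt c (outcome_at v))"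
    using assms outcome_at[OF assms(1)] outcome_at[OF assms(2)] unfolding lt_pt_def by force
qed

lemma outcome_at_between:
  assumes "u \<in> fst ` F ` D" "v \<in> fst ` F ` D" "\<And>n. f n \<in> fst ` F ` D \<inter> {u<..<v}"
  shows "\<And>n. outcome_at (f n) \<in> F ` D" "\<And>n. lt_pt (outcome_at u) (outcome_at (f n))"
    "\<And>n. lt_pt (outcome_at (f n)) (outcome_at v)"
  using assms outcome_at(1) outcome_at_less by auto

lemma interval_induction_outcomes:
  assumes "\<And>a b. consecutive a b \<Longrightarrow> P a b"
    and "\<And>a b c. a \<in> F ` D \<Longrightarrow> b \<in> F ` D \<Longrightarrow> c \<in> F ` D \<Longrightarrow> lt_pt a b \<Longrightarrow> lt_pt b c
           \<Longrightarrow> P a b \<Longrightarrow> P b c \<Longrightarrow> P a c"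
    and "\<And>a b X. a \<in> F ` D \<Longrightarrow> b \<in> F ` D \<Longrightarrow> (\<And>n. X n \<in> F ` D) \<Longrightarrow> (\<And>n. lt_pt a (X n))
           \<Longrightarrow> (\<And>n. lt_pt (X n) b) \<Longrightarrow> X \<longlonglongrightarrow> a \<Longrightarrow> (\<And>n. P (X n) b) \<Longrightarrow> P a b"
    and "\<And>a b X. a \<in> F ` D \<Longrightarrow> b \<in> F ` D \<Longrightarrow> (\<And>n. X n \<in> F ` D) \<Longrightarrow> (\<And>n. lt_pt a (X n))
           \<Longrightarrow> (\<And>n. lt_pt (X n) b) \<Longrightarrow> X \<longlonglongrightarrow> b \<Longrightarrow> (\<And>n. P a (X n)) \<Longrightarrow> P a b"
    and "a \<in> F ` D" "b \<in> F ` D" "lt_pt a b"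
  shows "P a b"
proof -
  let ?S = "fst ` F ` D"
  have "interval_induction ?S (\<lambda>u v. P (outcome_at u) (outcome_at v))"
  proof
    show "closed ?S" by (rule closed_fst_range)
  next
    fix u v assume "u \<in> ?S" "v \<in> ?S" "u < v" "?S \<inter> {u<..<v} = {}"
    then show "P (outcome_at u) (outcome_at v)" using assms(1) consecutive_outcome_at by blast
  next
    fix u v w assume "u \<in> ?S" "v \<in> ?S" "w \<in> ?S" "u < v" "v < w"
      "P (outcome_at u) (outcome_at v)" "P (outcome_at v) (outcome_at w)"
    then show "P (outcome_at u) (outcome_at w)"
      using assms(2)[OF outcome_at(1) outcome_at(1) outcome_at(1) outcome_at_less outcome_at_less] by blast
  next
    fix u v f assume uv: "u \<in> ?S" "v \<in> ?S" and f: "\<And>n. f n \<in> ?S \<inter> {u<..<v}" "f \<longlonglongrightarrow> u"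
      and P: "\<And>n. P (outcome_at (f n)) (outcome_at v)"
    have "(\<lambda>n. outcome_at (f n)) \<longlonglongrightarrow> outcome_at u"
      using tendsto_outcome_at[OF _ uv(1) f(2)] f(1) by blast
    with outcome_at_between[OF uv f(1)] show "P (outcome_at u) (outcome_at v)"
      by (rule assms(3)[OF outcome_at(1)[OF uv(1)] outcome_at(1)[OF uv(2)]]) (rule P)
  next
    fix u v f assume uv: "u \<in> ?S" "v \<in> ?S" and f: "\<And>n. f n \<in> ?S \<inter> {u<..<v}" "f \<longlonglongrightarrow> v"
      and P: "\<And>n. P (outcome_at u) (outcome_at (f n))"
    have "(\<lambda>n. outcome_at (f n)) \<longlonglongrightarrow> outcome_at v"
      using tendsto_outcome_at[OF _ uv(2) f(2)] f(1) by blast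
    with outcome_at_between[OF uv f(1)] show "P (outcome_at u) (outcome_at v)"
      by (rule assms(4)[OF outcome_at(1)[OF uv(1)] outcome_at(1)[OF uv(2)]]) (rule P)
  qed
  moreover have "fst a \<in> ?S" "fst b \<in> ?S" "fst a < fst b"
    using assms(5-7) unfolding lt_pt_def by auto
  ultimately have "P (outcome_at (fst a)) (outcome_at (fst b))"
    by (rule interval_induction.induct[OF _ finite_limpt_fst_range])
  then show ?thesis using outcome_at_fst assms(5,6) by simp
qed

lemma no_gain_up_range: "a \<in> F ` D \<Longrightarrow> b \<in> F ` D \<Longrightarrow> lt_pt a b \<Longrightarrow> no_gain_up a b"
  by (rule interval_induction_outcomes)
    (rule consecutive_no_gain no_gain_up_trans no_gain_up_limit_left no_gain_up_limit_right; assumption)+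

lemma no_gain_down_range: "a \<in> F ` D \<Longrightarrow> b \<in> F ` D \<Longrightarrow> lt_pt a b \<Longrightarrow> no_gain_down a b"
  by (rule interval_induction_outcomes)
    (rule consecutive_no_gain no_gain_down_trans no_gain_down_limit_left no_gain_down_limit_right;
      assumption)+

theorem strategy_proof: "strategy_proof D F"
  unfolding strategy_proof_def
proof (intro ballI)
  fix R T assume R: "R \<in> D" and T: "T \<in> D"
  consider "F R = F T" | "lt_pt (F R) (F T)" | "lt_pt (F T) (F R)" using F_trichotomy[OF R T] by blast
  then show "R (F R) (F T)"
  proof cases
    case 1
    then show ?thesis using preference.refl[OF preference[OF R]] F_in_Zset T by simp
  next
    case 2
    then show ?thesis using no_gain_up_range R T unfolding no_gain_up_def by blast
  next
    case 3
    then show ?thesis using no_gain_down_range R T unfolding no_gain_down_def by blast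
  qed
qed

end


theorem mainTheorem14:
  fixes D :: "pref set" and F :: "pref \<Rightarrow> pt"
  assumes "rich_single_crossing D"
    and "\<forall>R\<in>D. F R \<in> Zset"
    and "monotone_mech D F"
    and "VF_continuous D F"
    and "countable (F ` D)"
    and "closedin (top_of_set Zset) (F ` D)"
    and "finite {x. x islimpt (F ` D)}"
  shows "strategy_proof D F"
proof -
  interpret mechanism D F
    by (intro mechanism.intro rsc_domain.intro mechanism_axioms.intro) (use assms in auto)
  show ?thesis by (rule strategy_proof)
qed

end
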